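(* Let $n=p+q$, let $h^1,\dots,h^n:\mathbb{R}^{p,q}\to\mathcal{C}\ell_{\circledS}(p,q)$ be a Clifford field vector and $C_1,\dots,C_n:\mathbb{R}^{p,q}\to\mathcal{C}\ell_{\circledS}(p,q)$ be functions (all with continuous partial derivatives up to second order) such that $$\partial_\mu h^\nu-[C_\mu,h^\nu]=0\quad\text{for all }\mu,\nu=1,\dots,n.$$ Then $$\partial_\mu C_\nu-\partial_\nu C_\mu-[C_\mu,C_\nu]=0\quad\text{for all }\mu,\nu=1,\dots,n.$$ Moreover, these conditions are gauge invariant: if $C_\mu$ satisfy them and $S:\mathbb{R}^{p,q}\to\mathcal{C}\ell(p,q)$ is a smooth function with invertible values such that $S^{-1}\partial_\mu S\in\mathcal{C}\ell_{\circledS}(p,q)$ for all $\mu$, then $\acute C_\mu=S^{-1}C_\mu S-S^{-1}\partial_\mu S$ also satisfy $\partial_\mu \acute C_\nu-\partial_\nu \acute C_\mu-[\acute C_\mu,\acute C_\nu]=0$ for all $\mu,\nu$.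
   Context: $\mathbb{R}^{p,q}$ is $\mathbb{R}^n$ with Cartesian coordinates $x^\mu$, $\partial_\mu=\partial/\partial x^\mu$, metric $\eta=\mathrm{diag}(1,\dots,1,-1,\dots,-1)$ ($p$ ones, $q$ minus ones). $\mathcal{C}\ell(p,q)$ is the complex Clifford algebra with identity $e$ and generators $e^1,\dots,e^n$, $e^ae^b+e^be^a=2\eta^{ab}e$, with basis $e$, $e^{a_1\dots a_k}=e^{a_1}\cdots e^{a_k}$ ($a_1<\dots<a_k$); functions into it are differentiated coefficientwise. $[U,V]=UV-VU$. $\pi_k$ is the projection onto the span of the basis elements with $k$ indices, $\mathrm{Tr}(U)$ the coefficient of $e$. The center is $\mathcal{C}\ell_0$ for even $n$ and $\mathcal{C}\ell_0\oplus\mathcal{C}\ell_n$ for odd $n$; $\mathcal{C}\ell_{\circledS}(p,q)$ is the set of elements with zero projection onto the center. A Clifford field vector is a collection $h^\mu:\mathbb{R}^{p,q}\to\mathcal{C}\ell(p,q)$, $\mu=1,\dots,n$, with $h^\mu h^\nu+h^\nu h^\mu=2\eta^{\mu\nu}e$ and $\mathrm{Tr}(h^1\cdots h^n)=0$ at every point. *)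

theory Defs
  imports "HOL-Analysis.Analysis"
begin

text \<open>Generator indices are 0..n-1
 (the paper's 1..n shifted by one); generators 0..p-1 square to +1, p..n-1 to -1.
 An element is a coefficient function on index sets A \<subseteq> {..<n}
 (A stands for the basis element e^{a_1...a_k}, a_1<...<a_k; {} stands for e).\<close>

type_synonym cl = "nat set \<Rightarrow> complex"

definition eta :: "nat \<Rightarrow> nat \<Rightarrow> complex" where
  "eta p a = (if a < p then 1 else -1)"

definition metric :: "nat \<Rightarrow> nat \<Rightarrow> nat \<Rightarrow> complex" where
  "metric p a b = (if a = b then eta p a else 0)"

definition cl_valid :: "nat \<Rightarrow> nat \<Rightarrow> cl \<Rightarrow> bool" where
  "cl_valid p q U \<longleftrightarrow> (\<forall>A. \<not> A \<subseteq> {..<p+q} \<longrightarrow> U A = 0)"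

text \<open>e_A e_B = (-1)^{#inversions} (prod of eta over A \<inter> B) e_{A \<triangle> B}\<close>
definition cl_sign :: "nat \<Rightarrow> nat set \<Rightarrow> nat set \<Rightarrow> complex" where
  "cl_sign p A B = (-1) ^ card {(a, b). a \<in> A \<and> b \<in> B \<and> b < a} * (\<Prod>a\<in>A \<inter> B. eta p a)"

definition cl_mul :: "nat \<Rightarrow> nat \<Rightarrow> cl \<Rightarrow> cl \<Rightarrow> cl" where
  "cl_mul p q U V = (\<lambda>C. \<Sum>A\<in>Pow {..<p+q}. \<Sum>B\<in>Pow {..<p+q}.
      if (A - B) \<union> (B - A) = C then cl_sign p A B * U A * V B else 0)"

definition cl_one :: cl where
  "cl_one = (\<lambda>A. if A = {} then 1 else 0)"

definition cl_gen :: "nat \<Rightarrow> cl" where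
  "cl_gen a = (\<lambda>A. if A = {a} then 1 else 0)"

definition cl_zero :: cl where
  "cl_zero = (\<lambda>A. 0)"

definition cl_add :: "cl \<Rightarrow> cl \<Rightarrow> cl" where
  "cl_add U V = (\<lambda>A. U A + V A)"

definition cl_sub :: "cl \<Rightarrow> cl \<Rightarrow> cl" where
  "cl_sub U V = (\<lambda>A. U A - V A)"

definition cl_scale :: "complex \<Rightarrow> cl \<Rightarrow> cl" where
  "cl_scale c U = (\<lambda>A. c * U A)"

definition cl_comm :: "nat \<Rightarrow> nat \<Rightarrow> cl \<Rightarrow> cl \<Rightarrow> cl" where
  "cl_comm p q U V = cl_sub (cl_mul p q U V) (cl_mul p q V U)"

definition cl_tr :: "cl \<Rightarrow> complex" where
  "cl_tr U = U {}"

definition cl_prod_list :: "nat \<Rightarrow> nat \<Rightarrow> cl list \<Rightarrow> cl" where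
  "cl_prod_list p q Us = foldr (cl_mul p q) Us cl_one"

text \<open>Cl_S(p,q): zero projection onto the centre (Cl_0 for even n, Cl_0 + Cl_n for odd n)\<close>
definition cl_S :: "nat \<Rightarrow> nat \<Rightarrow> cl \<Rightarrow> bool" where
  "cl_S p q U \<longleftrightarrow> cl_valid p q U \<and> U {} = 0 \<and> (odd (p+q) \<longrightarrow> U {..<p+q} = 0)"

definition cl_invertible :: "nat \<Rightarrow> nat \<Rightarrow> cl \<Rightarrow> bool" where
  "cl_invertible p q U \<longleftrightarrow> (\<exists>T. cl_valid p q T \<and> cl_mul p q U T = cl_one \<and> cl_mul p q T U = cl_one)"

definition cl_inv :: "nat \<Rightarrow> nat \<Rightarrow> cl \<Rightarrow> cl" where
  "cl_inv p q U = (SOME T. cl_valid p q T \<and> cl_mul p q U T = cl_one \<and> cl_mul p q T U = cl_one)"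

text \<open>R^{p,q}: points are x :: nat \<Rightarrow> real with x i = 0 for i \<ge> n
 (coordinates x 0, ..., x (n-1)), carrying the product (= Euclidean) topology.\<close>
definition Rn :: "nat \<Rightarrow> (nat \<Rightarrow> real) set" where
  "Rn n = {x. \<forall>i\<ge>n. x i = 0}"

definition has_pd :: "((nat \<Rightarrow> real) \<Rightarrow> complex) \<Rightarrow> nat \<Rightarrow> (nat \<Rightarrow> real) \<Rightarrow> complex \<Rightarrow> bool" where
  "has_pd f mu x v \<longleftrightarrow> ((\<lambda>t::real. f (x(mu := x mu + t))) has_vector_derivative v) (at 0)"

definition pd :: "nat \<Rightarrow> ((nat \<Rightarrow> real) \<Rightarrow> complex) \<Rightarrow> (nat \<Rightarrow> real) \<Rightarrow> complex" where
  "pd mu f x = vector_derivative (\<lambda>t::real. f (x(mu := x mu + t))) (at 0)"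

fun Ck :: "nat \<Rightarrow> nat \<Rightarrow> ((nat \<Rightarrow> real) \<Rightarrow> complex) \<Rightarrow> bool" where
  "Ck n 0 f = continuous_on (Rn n) f"
| "Ck n (Suc k) f = (continuous_on (Rn n) f \<and>
      (\<forall>mu<n. \<forall>x\<in>Rn n. has_pd f mu x (pd mu f x)) \<and> (\<forall>mu<n. Ck n k (pd mu f)))"

definition cl_Ck :: "nat \<Rightarrow> nat \<Rightarrow> nat \<Rightarrow> ((nat \<Rightarrow> real) \<Rightarrow> cl) \<Rightarrow> bool" where
  "cl_Ck p q k F \<longleftrightarrow> (\<forall>A. Ck (p+q) k (\<lambda>x. F x A))"

definition cl_smooth :: "nat \<Rightarrow> nat \<Rightarrow> ((nat \<Rightarrow> real) \<Rightarrow> cl) \<Rightarrow> bool" where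
  "cl_smooth p q F \<longleftrightarrow> (\<forall>k. cl_Ck p q k F)"

definition cl_pd :: "nat \<Rightarrow> ((nat \<Rightarrow> real) \<Rightarrow> cl) \<Rightarrow> (nat \<Rightarrow> real) \<Rightarrow> cl" where
  "cl_pd mu F x = (\<lambda>A. pd mu (\<lambda>y. F y A) x)"

definition clifford_field_vector :: "nat \<Rightarrow> nat \<Rightarrow> (nat \<Rightarrow> (nat \<Rightarrow> real) \<Rightarrow> cl) \<Rightarrow> bool" where
  "clifford_field_vector p q h \<longleftrightarrow>
     (\<forall>x\<in>Rn (p+q).
        (\<forall>mu<p+q. cl_valid p q (h mu x)) \<and>
        (\<forall>mu<p+q. \<forall>nu<p+q.
           cl_add (cl_mul p q (h mu x) (h nu x)) (cl_mul p q (h nu x) (h mu x))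
             = cl_scale (2 * metric p mu nu) cl_one) \<and>
        cl_tr (cl_prod_list p q (map (\<lambda>mu. h mu x) [0..<p+q])) = 0)"

definition zero_curvature :: "nat \<Rightarrow> nat \<Rightarrow> (nat \<Rightarrow> (nat \<Rightarrow> real) \<Rightarrow> cl) \<Rightarrow> bool" where
  "zero_curvature p q C \<longleftrightarrow>
     (\<forall>x\<in>Rn (p+q). \<forall>mu<p+q. \<forall>nu<p+q.
        cl_sub (cl_sub (cl_pd mu (C nu) x) (cl_pd nu (C mu) x)) (cl_comm p q (C mu x) (C nu x)) = cl_zero)"

end

theory Submission
  imports Defs "HOL-Library.Function_Algebras"
begin

text \<open>
For the first claim, differentiate \<open>\<partial>\<^sub>\<mu> h\<^sup>\<rho> = [C\<^sub>\<mu>, h\<^sup>\<rho>]\<close> once more and antisymmetrise in \<open>\<mu>, \<nu>\<close>: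
the second derivatives of \<open>h\<^sup>\<rho>\<close> cancel by Schwarz's theorem, and the Jacobi identity leaves
\<open>[F\<^sub>\<mu>\<^sub>\<nu>, h\<^sup>\<rho>] = 0\<close> for the curvature \<open>F\<^sub>\<mu>\<^sub>\<nu>\<close>. At a fixed point the \<open>h\<^sup>\<rho>\<close> satisfy the Clifford
relations, and the vanishing trace of \<open>h\<^sup>1\<cdots>h\<^sup>n\<close> makes the \<open>2\<^sup>n\<close> ordered monomials in the \<open>h\<^sup>\<rho>\<close>
trace-dual to the reversed monomials, hence a basis. So \<open>F\<^sub>\<mu>\<^sub>\<nu>\<close> commutes with everything, in
particular with the generators \<open>e\<^sup>a\<close>, and is therefore central. But \<open>F\<^sub>\<mu>\<^sub>\<nu>\<close> has no central
component, because neither derivatives of Cl_S-valued functions nor commutators have one.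

Gauge invariance is a computation: with \<open>\<partial>(S\<^sup>-\<^sup>1) = -S\<^sup>-\<^sup>1 (\<partial>S) S\<^sup>-\<^sup>1\<close> and symmetry of the second
derivatives of \<open>S\<close>, the curvature of the transformed connection is \<open>S\<^sup>-\<^sup>1 F\<^sub>\<mu>\<^sub>\<nu> S\<close>.
\<close>

section \<open>Signs of products of basis elements\<close>

definition symd :: "'a set \<Rightarrow> 'a set \<Rightarrow> 'a set" where
  "symd A B = (A - B) \<union> (B - A)"

definition inversions :: "nat set \<Rightarrow> nat set \<Rightarrow> (nat \<times> nat) set" where
  "inversions A B = {(a, b). a \<in> A \<and> b \<in> B \<and> b < a}"

lemma symd_eq_iff: "symd A B = C \<longleftrightarrow> B = symd A C"
  unfolding symd_def by blast

lemma symd_eq_iff': "symd A C = B \<longleftrightarrow> A = symd B C"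
  unfolding symd_def by blast

lemma symd_subset_iff: "A \<subseteq> N \<Longrightarrow> symd A C \<subseteq> N \<longleftrightarrow> C \<subseteq> N"
  unfolding symd_def by blast

lemma symd_cancel [simp]:
  "symd A (symd A C) = C" "symd (symd A C) A = C" "symd (symd A C) C = A" "symd C (symd A C) = A"
  unfolding symd_def by blast+

lemma symd_empty [simp]: "symd A {} = A" "symd {} A = A" "symd A A = {}"
  unfolding symd_def by auto

lemma symd_empty_iff: "symd A C = {} \<longleftrightarrow> A = C"
  unfolding symd_def by blast

lemma finite_symd [simp]: "finite A \<Longrightarrow> finite B \<Longrightarrow> finite (symd A B)"
  unfolding symd_def by auto

lemma eta_mult_self: "eta p a * eta p a = 1"
  by (simp add: eta_def)

lemma eta_nonzero: "eta p a \<noteq> 0"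
  by (simp add: eta_def)

lemma prod_eta_nonzero: "(\<Prod>a\<in>B. eta p a) \<noteq> 0"
  by (cases "finite B") (auto simp: eta_nonzero)

lemma prod_symd:
  assumes "finite X" "finite Y" "\<And>x. f x * f x = (1::complex)"
  shows "prod f (symd X Y) = prod f X * prod f Y"
proof -
  have X: "prod f X = prod f (X - Y) * prod f (X \<inter> Y)"
    using prod.Int_Diff[OF assms(1), of f Y] by (simp add: mult.commute)
  have Y: "prod f Y = prod f (Y - X) * prod f (X \<inter> Y)"
    using prod.Int_Diff[OF assms(2), of f X] by (simp add: mult.commute Int_commute)
  have S: "prod f (symd X Y) = prod f (X - Y) * prod f (Y - X)"
    unfolding symd_def using assms by (subst prod.union_disjoint) auto
  have sq: "prod f (X \<inter> Y) * prod f (X \<inter> Y) = 1"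
    by (simp add: prod.distrib[symmetric] assms)
  have e: "(a * c) * (b * c) = (a * b) * (c * c)" for a b c :: complex
    by (simp only: ac_simps)
  show ?thesis
    unfolding X Y S e sq by simp
qed

lemma neg_one_power_card_symd:
  assumes "finite X" "finite Y"
  shows "(-1::complex) ^ card (symd X Y) = (-1) ^ card X * (-1) ^ card Y"
proof -
  have "card X = card (X - Y) + card (X \<inter> Y)"
    using assms card_Diff_subset_Int[of X Y] card_mono[of X "X \<inter> Y"] by auto
  moreover have "card Y = card (Y - X) + card (X \<inter> Y)"
    using assms card_Diff_subset_Int[of Y X] card_mono[of Y "X \<inter> Y"] by (auto simp: Int_commute)
  moreover have "card (symd X Y) = card (X - Y) + card (Y - X)"
    unfolding symd_def using assms by (subst card_Un_disjoint) auto
  ultimately have "card X + card Y = card (symd X Y) + 2 * card (X \<inter> Y)"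
    by simp
  then have "(-1::complex) ^ card X * (-1) ^ card Y = (-1) ^ (card (symd X Y) + 2 * card (X \<inter> Y))"
    by (simp flip: power_add)
  also have "\<dots> = (-1) ^ card (symd X Y)"
    by (simp only: power_add power_mult) simp
  finally show ?thesis
    by simp
qed

lemma finite_inversions: "finite A \<Longrightarrow> finite B \<Longrightarrow> finite (inversions A B)"
  unfolding inversions_def by (rule finite_subset[of _ "A \<times> B"]) auto

lemma cl_sign_inversions: "cl_sign p A B = (-1) ^ card (inversions A B) * (\<Prod>a\<in>A \<inter> B. eta p a)"
  unfolding cl_sign_def inversions_def by simp

lemma cl_sign_empty [simp]: "cl_sign p A {} = 1" "cl_sign p {} A = 1"
  unfolding cl_sign_def by simp_all

lemma norm_cl_sign: "cmod (cl_sign p A B) = 1"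
proof -
  have "cmod (eta p a) = 1" for a
    by (simp add: eta_def)
  then show ?thesis
    unfolding cl_sign_def by (simp add: norm_mult norm_power prod_norm[symmetric])
qed

lemma cl_sign_mult_self: "cl_sign p A B * cl_sign p A B = 1"
proof -
  have e1: "(\<Prod>a\<in>A \<inter> B. eta p a) * (\<Prod>a\<in>A \<inter> B. eta p a) = 1"
    by (simp add: prod.distrib[symmetric] eta_mult_self)
  have e2: "((-1::complex) ^ card (inversions A B)) * (-1) ^ card (inversions A B) = 1"
    by (simp flip: power_add)
  have e3: "(a * b) * (a * b) = (a * a) * (b * b)" for a b :: complex
    by (simp only: ac_simps)
  show ?thesis
    unfolding cl_sign_inversions by (subst e3) (simp add: e1 e2)
qed

lemma cl_sign_symd_left:
  assumes "finite A" "finite B" "finite C"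
  shows "cl_sign p (symd A B) C = cl_sign p A C * cl_sign p B C"
proof -
  have "inversions (symd A B) C = symd (inversions A C) (inversions B C)"
    unfolding inversions_def symd_def by auto
  then have 1: "(-1::complex) ^ card (inversions (symd A B) C)
      = (-1) ^ card (inversions A C) * (-1) ^ card (inversions B C)"
    by (simp add: neg_one_power_card_symd finite_inversions assms)
  have "symd A B \<inter> C = symd (A \<inter> C) (B \<inter> C)"
    unfolding symd_def by auto
  then have 2: "(\<Prod>a\<in>symd A B \<inter> C. eta p a) = (\<Prod>a\<in>A \<inter> C. eta p a) * (\<Prod>a\<in>B \<inter> C. eta p a)"
    by (simp add: prod_symd assms eta_mult_self)
  show ?thesis
    unfolding cl_sign_inversions 1 2 by (simp only: ac_simps)
qed

lemma cl_sign_symd_right: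
  assumes "finite A" "finite B" "finite C"
  shows "cl_sign p A (symd B C) = cl_sign p A B * cl_sign p A C"
proof -
  have "inversions A (symd B C) = symd (inversions A B) (inversions A C)"
    unfolding inversions_def symd_def by auto
  then have 1: "(-1::complex) ^ card (inversions A (symd B C))
      = (-1) ^ card (inversions A B) * (-1) ^ card (inversions A C)"
    by (simp add: neg_one_power_card_symd finite_inversions assms)
  have "A \<inter> symd B C = symd (A \<inter> B) (A \<inter> C)"
    unfolding symd_def by auto
  then have 2: "(\<Prod>a\<in>A \<inter> symd B C. eta p a) = (\<Prod>a\<in>A \<inter> B. eta p a) * (\<Prod>a\<in>A \<inter> C. eta p a)"
    by (simp add: prod_symd assms eta_mult_self)
  show ?thesis
    unfolding cl_sign_inversions 1 2 by (simp only: ac_simps)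
qed

lemma card_inversions_swap:
  assumes "finite A" "finite B" "A \<inter> B = {}"
  shows "card (inversions A B) + card (inversions B A) = card A * card B"
proof -
  have u: "A \<times> B = inversions A B \<union> prod.swap ` inversions B A"
    unfolding inversions_def using assms(3) by (auto simp: image_iff)
  have d: "inversions A B \<inter> prod.swap ` inversions B A = {}"
    unfolding inversions_def by auto
  have "card (A \<times> B) = card (inversions A B) + card (prod.swap ` inversions B A)"
    unfolding u using finite_inversions[OF assms(1,2)] finite_inversions[OF assms(2,1)] d
    by (intro card_Un_disjoint) auto
  also have "card (prod.swap ` inversions B A) = card (inversions B A)"
    by (rule card_image, rule inj_onI) (metis swap_swap)
  finally show ?thesis
    by (simp add: card_cartesian_product)
qed

lemma cl_sign_disjoint_commute:
  assumes "finite A" "finite B" "A \<inter> B = {}" "even (card A * card B)"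
  shows "cl_sign p A B = cl_sign p B A"
proof -
  have e: "even (card (inversions A B) + card (inversions B A))"
    using card_inversions_swap[OF assms(1-3)] assms(4) by simp
  have "(-1::complex) ^ card (inversions A B) = (-1) ^ card (inversions B A)"
  proof (cases "even (card (inversions A B))")
    case True
    then show ?thesis using e by simp
  next
    case False
    then show ?thesis using e by simp
  qed
  moreover have "B \<inter> A = {}"
    using assms(3) by blast
  ultimately show ?thesis
    unfolding cl_sign_inversions using assms(3) by simp
qed

lemma card_inversions_singleton:
  assumes "finite D"
  shows "card (inversions D {a}) + card (inversions {a} D) = card (D - {a})"
proof -
  have 1: "inversions D {a} = (\<lambda>d. (d, a)) ` {d\<in>D. a < d}" "inversions {a} D = (\<lambda>d. (a, d)) ` {d\<in>D. d < a}"
    unfolding inversions_def by auto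
  have "card (inversions D {a}) = card {d\<in>D. a < d}" "card (inversions {a} D) = card {d\<in>D. d < a}"
    unfolding 1 by (rule card_image, auto simp: inj_on_def)+
  moreover have "D - {a} = {d\<in>D. a < d} \<union> {d\<in>D. d < a}"
    by auto
  then have "card (D - {a}) = card {d\<in>D. a < d} + card {d\<in>D. d < a}"
    by (metis (no_types, lifting) card_Un_disjoint assms disjoint_iff finite_Diff finite_Un
        mem_Collect_eq order.asym)
  ultimately show ?thesis
    by simp
qed

lemma cl_sign_singleton_swap:
  assumes "finite D"
  shows "cl_sign p D {a} * cl_sign p {a} D = (-1) ^ card (D - {a})"
proof -
  have eta: "(\<Prod>x\<in>D \<inter> {a}. eta p x) * (\<Prod>x\<in>{a} \<inter> D. eta p x) = 1"
    by (simp add: Int_commute prod.distrib[symmetric] eta_mult_self)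
  have "cl_sign p D {a} * cl_sign p {a} D =
     ((-1) ^ card (inversions D {a}) * (-1) ^ card (inversions {a} D)) *
     ((\<Prod>x\<in>D \<inter> {a}. eta p x) * (\<Prod>x\<in>{a} \<inter> D. eta p x))"
    unfolding cl_sign_inversions by (simp only: ac_simps)
  also have "\<dots> = (-1) ^ card (D - {a})"
    unfolding eta by (simp add: card_inversions_singleton[OF assms] flip: power_add)
  finally show ?thesis .
qed

section \<open>The Clifford algebra\<close>

lemma cl_add_eq: "cl_add U V = U + V"
  by (simp add: cl_add_def fun_eq_iff)

lemma cl_sub_eq: "cl_sub U V = U - V"
  by (simp add: cl_sub_def fun_eq_iff)

lemma cl_zero_eq: "cl_zero = 0"
  by (simp add: cl_zero_def fun_eq_iff)

lemma cl_comm_eq: "cl_comm p q U V = cl_mul p q U V - cl_mul p q V U"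
  by (simp add: cl_comm_def cl_sub_eq)

lemma cl_mul_apply: "cl_mul p q U V C = (if C \<subseteq> {..<p+q} then
   (\<Sum>A\<in>Pow {..<p+q}. cl_sign p A (symd A C) * U A * V (symd A C)) else 0)"
proof -
  have inner: "(\<Sum>B\<in>Pow {..<p+q}. if (A - B) \<union> (B - A) = C then cl_sign p A B * U A * V B else 0)
     = (if C \<subseteq> {..<p+q} then cl_sign p A (symd A C) * U A * V (symd A C) else 0)"
    if "A \<in> Pow {..<p+q}" for A
  proof -
    have "(\<Sum>B\<in>Pow {..<p+q}. if (A - B) \<union> (B - A) = C then cl_sign p A B * U A * V B else 0)
      = (\<Sum>B\<in>Pow {..<p+q}. if B = symd A C then cl_sign p A B * U A * V B else 0)"
      by (rule sum.cong) (auto simp flip: symd_def simp: symd_eq_iff)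
    also have "\<dots> = (if symd A C \<in> Pow {..<p+q} then cl_sign p A (symd A C) * U A * V (symd A C) else 0)"
      by (rule sum.delta) simp
    finally show ?thesis
      using symd_subset_iff[of A "{..<p+q}" C] that by auto
  qed
  have "cl_mul p q U V C = (\<Sum>A\<in>Pow {..<p+q}.
      if C \<subseteq> {..<p+q} then cl_sign p A (symd A C) * U A * V (symd A C) else 0)"
    unfolding cl_mul_def by (rule sum.cong[OF refl inner])
  then show ?thesis
    by simp
qed

lemma cl_valid_mul [simp]: "cl_valid p q (cl_mul p q U V)"
  unfolding cl_valid_def by (simp add: cl_mul_apply)

lemma cl_valid_one [simp]: "cl_valid p q cl_one"
  unfolding cl_valid_def cl_one_def by auto

lemma cl_valid_diff [simp]: "cl_valid p q U \<Longrightarrow> cl_valid p q V \<Longrightarrow> cl_valid p q (U - V)"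
  by (simp add: cl_valid_def)

lemma cl_mul_add_left: "cl_mul p q (U + V) W = cl_mul p q U W + cl_mul p q V W"
  by (simp add: fun_eq_iff cl_mul_apply algebra_simps sum.distrib)

lemma cl_mul_add_right: "cl_mul p q W (U + V) = cl_mul p q W U + cl_mul p q W V"
  by (simp add: fun_eq_iff cl_mul_apply algebra_simps sum.distrib)

lemma cl_mul_diff_left: "cl_mul p q (U - V) W = cl_mul p q U W - cl_mul p q V W"
  by (simp add: fun_eq_iff cl_mul_apply algebra_simps sum_subtractf)

lemma cl_mul_diff_right: "cl_mul p q W (U - V) = cl_mul p q W U - cl_mul p q W V"
  by (simp add: fun_eq_iff cl_mul_apply algebra_simps sum_subtractf)

lemma cl_mul_minus_left: "cl_mul p q (- U) W = - cl_mul p q U W"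
  by (simp add: fun_eq_iff cl_mul_apply sum_negf)

lemma cl_mul_minus_right: "cl_mul p q W (- U) = - cl_mul p q W U"
  by (simp add: fun_eq_iff cl_mul_apply sum_negf)

lemma cl_mul_zero_left [simp]: "cl_mul p q 0 W = 0"
  by (simp add: fun_eq_iff cl_mul_apply)

lemma cl_mul_zero_right [simp]: "cl_mul p q W 0 = 0"
  by (simp add: fun_eq_iff cl_mul_apply)

lemma cl_mul_scale_left: "cl_mul p q (cl_scale c U) W = cl_scale c (cl_mul p q U W)"
  by (simp add: fun_eq_iff cl_mul_apply cl_scale_def sum_distrib_left algebra_simps)

lemma cl_mul_scale_right: "cl_mul p q W (cl_scale c U) = cl_scale c (cl_mul p q W U)"
  by (simp add: fun_eq_iff cl_mul_apply cl_scale_def sum_distrib_left algebra_simps)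

lemma cl_scale_scale [simp]: "cl_scale c (cl_scale d U) = cl_scale (c * d) U"
  by (simp add: cl_scale_def fun_eq_iff)

lemma cl_scale_one [simp]: "cl_scale 1 U = U"
  by (simp add: cl_scale_def fun_eq_iff)

lemma cl_scale_neg_one: "cl_scale (-1) U = - U"
  by (simp add: cl_scale_def fun_eq_iff)

lemma cl_mul_one_right:
  assumes "cl_valid p q U"
  shows "cl_mul p q U cl_one = U"
proof
  fix C
  show "cl_mul p q U cl_one C = U C"
  proof (cases "C \<subseteq> {..<p+q}")
    case True
    have "cl_mul p q U cl_one C = (\<Sum>A\<in>Pow {..<p+q}. cl_sign p A (symd A C) * U A * cl_one (symd A C))"
      using True by (simp add: cl_mul_apply)
    also have "\<dots> = (\<Sum>A\<in>Pow {..<p+q}. if A = C then U C else 0)"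
      by (rule sum.cong) (auto simp: cl_one_def symd_empty_iff)
    finally show ?thesis
      using True by simp
  next
    case False
    then show ?thesis
      using assms by (simp add: cl_mul_apply cl_valid_def)
  qed
qed

lemma cl_mul_one_left:
  assumes "cl_valid p q U"
  shows "cl_mul p q cl_one U = U"
proof
  fix C
  show "cl_mul p q cl_one U C = U C"
  proof (cases "C \<subseteq> {..<p+q}")
    case True
    have "cl_mul p q cl_one U C = (\<Sum>A\<in>Pow {..<p+q}. cl_sign p A (symd A C) * cl_one A * U (symd A C))"
      using True by (simp add: cl_mul_apply)
    also have "\<dots> = (\<Sum>A\<in>Pow {..<p+q}. if A = {} then U C else 0)"
      by (rule sum.cong) (auto simp: cl_one_def)
    finally show ?thesis
      using True by simp
  next
    case False
    then show ?thesis
      using assms by (simp add: cl_mul_apply cl_valid_def)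
  qed
qed

lemma cl_sign_cocycle:
  assumes "finite A" "finite C" "finite D"
  shows "cl_sign p A (symd A D) * cl_sign p (symd A C) (symd C D)
    = cl_sign p C (symd C D) * cl_sign p A (symd A C)"
proof -
  have "cl_sign p (symd A C) (symd C D) = cl_sign p A (symd C D) * cl_sign p C (symd C D)"
    using assms by (intro cl_sign_symd_left) (auto simp: symd_def)
  moreover have "symd A D = symd (symd A C) (symd C D)"
    unfolding symd_def by blast
  then have "cl_sign p A (symd A D) = cl_sign p A (symd A C) * cl_sign p A (symd C D)"
    by (simp add: cl_sign_symd_right assms)
  ultimately show ?thesis
    using cl_sign_mult_self[of p A "symd C D"] by (simp add: algebra_simps)
qed

text \<open>Both sides are double sums over basis indices; they match under \<open>C \<mapsto> symd A C\<close> by the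
cocycle identity for \<open>cl_sign\<close>.\<close>

lemma cl_mul_assoc: "cl_mul p q (cl_mul p q U V) W = cl_mul p q U (cl_mul p q V W)"
proof
  fix D
  let ?N = "Pow {..<p+q}"
  let ?s = "cl_sign p"
  show "cl_mul p q (cl_mul p q U V) W D = cl_mul p q U (cl_mul p q V W) D"
  proof (cases "D \<subseteq> {..<p+q}")
    case False
    then show ?thesis
      by (simp add: cl_mul_apply)
  next
    case True
    have L: "cl_mul p q (cl_mul p q U V) W D = (\<Sum>C\<in>?N. \<Sum>A\<in>?N.
        ?s C (symd C D) * ?s A (symd A C) * U A * V (symd A C) * W (symd C D))"
      using True by (simp add: cl_mul_apply sum_distrib_left sum_distrib_right algebra_simps)
    have "symd A D \<subseteq> {..<p+q}" if "A \<in> ?N" for A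
      using symd_subset_iff[of A "{..<p+q}" D] that True by auto
    then have R: "cl_mul p q U (cl_mul p q V W) D = (\<Sum>A\<in>?N. \<Sum>B\<in>?N.
        ?s A (symd A D) * ?s B (symd B (symd A D)) * U A * V B * W (symd B (symd A D)))"
      using True by (simp add: cl_mul_apply sum_distrib_left sum_distrib_right algebra_simps)
    have "(\<Sum>C\<in>?N. ?s C (symd C D) * ?s A (symd A C) * U A * V (symd A C) * W (symd C D)) =
       (\<Sum>B\<in>?N. ?s A (symd A D) * ?s B (symd B (symd A D)) * U A * V B * W (symd B (symd A D)))"
      if A: "A \<in> ?N" for A
    proof (rule sum.reindex_bij_witness[of _ "symd A" "symd A"])
      fix C
      assume C: "C \<in> ?N"
      then show "symd A (symd A C) = C" "symd A C \<in> ?N"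
        using symd_subset_iff[of A "{..<p+q}" C] A by auto
      have "symd (symd A C) (symd A D) = symd C D"
        unfolding symd_def by blast
      moreover have "finite A" "finite C" "finite D"
        using A C True by (auto intro: finite_subset)
      ultimately show "?s A (symd A D) * ?s (symd A C) (symd (symd A C) (symd A D)) * U A * V (symd A C)
            * W (symd (symd A C) (symd A D))
          = ?s C (symd C D) * ?s A (symd A C) * U A * V (symd A C) * W (symd C D)"
        using cl_sign_cocycle[of A C D p] by (simp add: algebra_simps)
    next
      fix B
      assume B: "B \<in> ?N"
      then show "symd A (symd A B) = B" "symd A B \<in> ?N"
        using symd_subset_iff[of A "{..<p+q}" B] A by auto
    qed
    then show ?thesis
      unfolding L R by (subst sum.swap) (rule sum.cong[OF refl])
  qed
qed

lemma cl_mul_empty_commute: "cl_mul p q U V {} = cl_mul p q V U {}"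
  by (simp add: cl_mul_apply mult_ac)

text \<open>For odd \<open>n\<close> the top basis element is central, so commutators have no top component.\<close>

lemma cl_mul_top_commute:
  assumes odd: "odd (p+q)"
  shows "cl_mul p q U V {..<p+q} = cl_mul p q V U {..<p+q}"
proof -
  let ?N = "{..<p+q}"
  have "(\<Sum>B\<in>Pow ?N. cl_sign p B (symd B ?N) * V B * U (symd B ?N)) =
        (\<Sum>A\<in>Pow ?N. cl_sign p A (symd A ?N) * U A * V (symd A ?N))"
  proof (rule sum.reindex_bij_witness[of _ "\<lambda>A. symd A ?N" "\<lambda>B. symd B ?N"])
    fix A
    assume A: "A \<in> Pow ?N"
    show "symd (symd A ?N) ?N = A"
      by simp
    show "symd A ?N \<in> Pow ?N"
      using A by (auto simp: symd_def)
    have fA: "finite A"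
      using A finite_subset by auto
    have sA: "symd A ?N = ?N - A"
      using A by (auto simp: symd_def)
    have "card (?N - A) = (p+q) - card A" "card A \<le> p+q"
      using A card_mono[of ?N A] by (auto simp: card_Diff_subset fA)
    then have "even (card A * card (?N - A))"
      using odd by auto
    then have "cl_sign p (symd A ?N) A = cl_sign p A (symd A ?N)"
      unfolding sA by (intro cl_sign_disjoint_commute[symmetric]) (use fA in auto)
    then show "cl_sign p (symd A ?N) (symd (symd A ?N) ?N) * U (symd A ?N) * V (symd (symd A ?N) ?N)
         = cl_sign p A (symd A ?N) * V A * U (symd A ?N)"
      by simp
  next
    fix B
    assume B: "B \<in> Pow ?N"
    show "symd (symd B ?N) ?N = B"
      by simp
    show "symd B ?N \<in> Pow ?N"
      using B by (auto simp: symd_def)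
  qed
  then show ?thesis
    by (simp add: cl_mul_apply)
qed

lemma cl_tr_scale [simp]: "cl_tr (cl_scale c U) = c * cl_tr U"
  by (simp add: cl_tr_def cl_scale_def)

lemma cl_tr_minus [simp]: "cl_tr (- U) = - cl_tr U"
  by (simp add: cl_tr_def)

lemma cl_tr_one [simp]: "cl_tr cl_one = 1"
  by (simp add: cl_tr_def cl_one_def)

lemma cl_tr_mul: "cl_tr (cl_mul p q U V) = (\<Sum>A\<in>Pow {..<p+q}. cl_sign p A A * U A * V A)"
  by (simp add: cl_tr_def cl_mul_apply)

lemma cl_tr_mul_commute: "cl_tr (cl_mul p q U V) = cl_tr (cl_mul p q V U)"
  unfolding cl_tr_def by (rule cl_mul_empty_commute)

lemma cl_prod_list_Nil [simp]: "cl_prod_list p q [] = cl_one"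
  by (simp add: cl_prod_list_def)

lemma cl_prod_list_Cons [simp]: "cl_prod_list p q (U # Us) = cl_mul p q U (cl_prod_list p q Us)"
  by (simp add: cl_prod_list_def)

lemma cl_valid_prod_list [simp]: "cl_valid p q (cl_prod_list p q Us)"
  by (cases Us) auto

lemma cl_prod_list_append [simp]:
  "cl_prod_list p q (Us @ Vs) = cl_mul p q (cl_prod_list p q Us) (cl_prod_list p q Vs)"
  by (induction Us) (auto simp: cl_mul_one_left cl_mul_assoc)

lemma cl_invertible_inv:
  assumes "cl_invertible p q U"
  shows "cl_valid p q (cl_inv p q U)" "cl_mul p q U (cl_inv p q U) = cl_one"
    "cl_mul p q (cl_inv p q U) U = cl_one"
  using someI_ex[OF assms[unfolded cl_invertible_def]] unfolding cl_inv_def by auto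

section \<open>Monomials in Clifford generators\<close>

fun odd_letters :: "nat list \<Rightarrow> nat set" where
  "odd_letters [] = {}"
| "odd_letters (a # w) = symd (odd_letters w) {a}"

lemma odd_letters_subset: "set w \<subseteq> N \<Longrightarrow> odd_letters w \<subseteq> N"
  by (induction w) (auto simp: symd_def)

lemma odd_letters_append: "odd_letters (u @ v) = symd (odd_letters u) (odd_letters v)"
  by (induction u) (auto simp: symd_def)

lemma odd_letters_distinct: "distinct w \<Longrightarrow> odd_letters w = set w"
  by (induction w) (auto simp: symd_def)

lemma odd_letters_rev: "odd_letters (rev w) = odd_letters w"
  by (induction w) (auto simp: odd_letters_append symd_def)

locale clifford_generators =
  fixes p q :: nat and g :: "nat \<Rightarrow> cl"
  assumes valid_gen: "\<And>a. a < p+q \<Longrightarrow> cl_valid p q (g a)"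
    and anticommute_gen: "\<And>a b. a < p+q \<Longrightarrow> b < p+q \<Longrightarrow>
      cl_mul p q (g a) (g b) + cl_mul p q (g b) (g a) = cl_scale (2 * metric p a b) cl_one"
    and tr_prod_gen: "cl_tr (cl_prod_list p q (map g [0..<p+q])) = 0"
begin

abbreviation M :: "cl \<Rightarrow> cl \<Rightarrow> cl"
  where "M \<equiv> cl_mul p q"

abbreviation gprod :: "nat list \<Rightarrow> cl"
  where "gprod w \<equiv> cl_prod_list p q (map g w)"

lemma gen_mult_self: "a < p+q \<Longrightarrow> M (g a) (g a) = cl_scale (eta p a) cl_one"
  using fun_cong[OF anticommute_gen[of a a]]
  by (simp add: metric_def cl_scale_def fun_eq_iff flip: mult_2)

lemma gen_anticommute: "a < p+q \<Longrightarrow> b < p+q \<Longrightarrow> a \<noteq> b \<Longrightarrow> M (g a) (g b) = - M (g b) (g a)"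
  using anticommute_gen[of a b]
  by (simp add: metric_def cl_scale_def fun_eq_iff eq_neg_iff_add_eq_0)

lemma gen_mul_sorted_gprod:
  assumes "sorted_wrt (<) L" "set L \<subseteq> {..<p+q}" "a < p+q"
  shows "\<exists>c L'. c \<noteq> 0 \<and> sorted_wrt (<) L' \<and> set L' = symd (set L) {a} \<and>
    M (g a) (gprod L) = cl_scale c (gprod L')"
  using assms
proof (induction L)
  case Nil
  then show ?case
    by (intro exI[of _ 1] exI[of _ "[a]"]) (simp add: symd_def)
next
  case (Cons b L)
  have b: "b < p+q" and L: "set L \<subseteq> {..<p+q}" "sorted_wrt (<) L" "\<forall>x\<in>set L. b < x"
    using Cons.prems by auto
  consider "a < b" | "a = b" | "b < a"
    by linarith
  then show ?case
  proof cases
    case 1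
    then show ?thesis
      using Cons.prems L by (intro exI[of _ 1] exI[of _ "a # b # L"]) (auto simp: symd_def)
  next
    case 2
    have "M (g a) (gprod (b # L)) = cl_scale (eta p a) (gprod L)"
      using 2 b by (simp add: cl_mul_assoc[symmetric] gen_mult_self cl_mul_scale_left cl_mul_one_left)
    moreover have "set L = symd (set (b # L)) {a}"
      using 2 L by (auto simp: symd_def)
    ultimately show ?thesis
      using L eta_nonzero by (intro exI[of _ "eta p a"] exI[of _ L]) auto
  next
    case 3
    obtain c L' where c: "c \<noteq> 0" "sorted_wrt (<) L'" "set L' = symd (set L) {a}"
      "M (g a) (gprod L) = cl_scale c (gprod L')"
      using Cons.IH L Cons.prems(3) by blast
    have "M (g a) (gprod (b # L)) = - M (g b) (M (g a) (gprod L))"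
      using gen_anticommute[of a b] 3 b Cons.prems(3)
      by (simp add: cl_mul_assoc[symmetric] cl_mul_minus_left)
    also have "\<dots> = cl_scale (-c) (gprod (b # L'))"
      using c(4) by (simp add: cl_mul_scale_right cl_scale_neg_one[symmetric])
    finally show ?thesis
      using c L 3 by (intro exI[of _ "-c"] exI[of _ "b # L'"]) (auto simp: symd_def)
  qed
qed

lemma gprod_normal_form:
  "set w \<subseteq> {..<p+q} \<Longrightarrow>
   \<exists>c L. c \<noteq> 0 \<and> sorted_wrt (<) L \<and> set L = odd_letters w \<and> gprod w = cl_scale c (gprod L)"
proof (induction w)
  case Nil
  then show ?case
    by (intro exI[of _ 1] exI[of _ "[]"]) auto
next
  case (Cons a w)
  then obtain c L where c: "c \<noteq> 0" "sorted_wrt (<) L" "set L = odd_letters w" "gprod w = cl_scale c (gprod L)"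
    by auto
  have "set L \<subseteq> {..<p+q}"
    using c(3) odd_letters_subset[of w] Cons.prems by auto
  then obtain c' L' where c': "c' \<noteq> 0" "sorted_wrt (<) L'" "set L' = symd (set L) {a}"
    "M (g a) (gprod L) = cl_scale c' (gprod L')"
    using gen_mul_sorted_gprod[OF c(2), of a] Cons.prems by auto
  have "gprod (a # w) = cl_scale (c * c') (gprod L')"
    using c(4) c'(4) by (simp add: cl_mul_scale_right)
  then show ?case
    using c c' by (intro exI[of _ "c * c'"] exI[of _ L']) auto
qed

lemma gen_commute_gprod:
  "distinct L \<Longrightarrow> set L \<subseteq> {..<p+q} \<Longrightarrow> d < p+q \<Longrightarrow>
   M (g d) (gprod L) = cl_scale ((-1) ^ length L * (if d \<in> set L then -1 else 1)) (M (gprod L) (g d))"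
proof (induction L)
  case Nil
  then show ?case
    by (simp add: cl_mul_one_right cl_mul_one_left valid_gen)
next
  case (Cons b L)
  have b: "b < p+q" "b \<notin> set L" "distinct L" "set L \<subseteq> {..<p+q}"
    using Cons.prems by auto
  note IH = Cons.IH[OF b(3,4) Cons.prems(3)]
  show ?case
  proof (cases "d = b")
    case True
    have "M (g d) (gprod (b # L)) = cl_scale ((-1) ^ length L) (M (g b) (M (gprod L) (g b)))"
      using IH True b(2) by (simp add: cl_mul_scale_right)
    then show ?thesis
      using True b(2) by (simp add: cl_mul_assoc)
  next
    case False
    have "M (g d) (gprod (b # L)) = - M (g b) (M (g d) (gprod L))"
      using gen_anticommute[of d b] False b Cons.prems(3)
      by (simp add: cl_mul_assoc[symmetric] cl_mul_minus_left)
    then show ?thesis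
      using IH False by (simp add: cl_mul_scale_right cl_mul_assoc cl_scale_neg_one[symmetric])
  qed
qed

text \<open>By cyclicity of the trace, \<open>tr (g\<^sub>d g\<^sub>d X) = - tr (g\<^sub>d g\<^sub>d X)\<close>.\<close>

lemma tr_eq_0_if_anticommute_gen:
  assumes d: "d < p+q" and X: "cl_valid p q X" and anticommute: "M (g d) X = - M X (g d)"
  shows "cl_tr X = 0"
proof -
  have "cl_tr (M (g d) (M (g d) X)) = cl_tr (M (M (g d) X) (g d))"
    by (rule cl_tr_mul_commute)
  also have "\<dots> = cl_tr (M (g d) (M X (g d)))"
    by (simp add: cl_mul_assoc)
  also have "\<dots> = - cl_tr (M (g d) (M (g d) X))"
    by (simp add: anticommute cl_mul_minus_right)
  finally have "cl_tr (M (g d) (M (g d) X)) = 0"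
    by simp
  moreover have "M (g d) (M (g d) X) = cl_scale (eta p d) X"
    using d X by (simp add: cl_mul_assoc[symmetric] gen_mult_self cl_mul_scale_left cl_mul_one_left)
  ultimately show ?thesis
    using eta_nonzero by simp
qed

text \<open>Some generator anticommutes with every nonempty sorted monomial except \<open>g\<^sub>0\<cdots>g\<^sub>n\<^sub>-\<^sub>1\<close> with
\<open>n\<close> odd, whose trace vanishes by assumption.\<close>

lemma tr_sorted_gprod:
  assumes L: "sorted_wrt (<) L" "set L \<subseteq> {..<p+q}" "L \<noteq> []"
  shows "cl_tr (gprod L) = 0"
proof -
  have dL: "distinct L"
    using L(1) strict_sorted_iff by blast
  have anti: "cl_tr (gprod L) = 0"
    if d: "d < p+q" and sign: "(-1::complex) ^ length L * (if d \<in> set L then -1 else 1) = -1" for d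
    using gen_commute_gprod[OF dL L(2) d] sign
    by (intro tr_eq_0_if_anticommute_gen[OF d]) (simp_all add: cl_scale_neg_one)
  show ?thesis
  proof (cases "even (length L)")
    case True
    obtain d where "d \<in> set L"
      using L(3) by (cases L) auto
    then show ?thesis
      using anti[of d] L(2) True by auto
  next
    case odd: False
    show ?thesis
    proof (cases "\<exists>d<p+q. d \<notin> set L")
      case True
      then show ?thesis
        using anti odd by auto
    next
      case False
      then have "set L = set [0..<p+q]"
        using L(2) by auto
      then have "L = [0..<p+q]"
        using sorted_distinct_set_unique[of L "[0..<p+q]"] dL L(1) strict_sorted_iff by auto
      then show ?thesis
        using tr_prod_gen by simp
    qed
  qed
qed

lemma gprod_palindrome:
  "distinct L \<Longrightarrow> set L \<subseteq> {..<p+q} \<Longrightarrow> gprod (L @ rev L) = cl_scale (\<Prod>a\<in>set L. eta p a) cl_one"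
proof (induction L)
  case Nil
  then show ?case
    by simp
next
  case (Cons a L)
  then have a: "a < p+q" "a \<notin> set L"
    by auto
  have "gprod ((a # L) @ rev (a # L)) = M (g a) (M (gprod (L @ rev L)) (gprod [a]))"
    by (simp add: cl_mul_assoc)
  also have "\<dots> = cl_scale ((\<Prod>a\<in>set L. eta p a) * eta p a) cl_one"
    using Cons a
    by (simp add: cl_mul_one_right cl_mul_scale_left cl_mul_scale_right cl_mul_one_left valid_gen
        gen_mult_self)
  finally show ?case
    using a by (simp add: mult.commute)
qed

definition monomial :: "nat set \<Rightarrow> cl"
  where "monomial A = gprod (sorted_list_of_set A)"

definition rev_monomial :: "nat set \<Rightarrow> cl"
  where "rev_monomial A = gprod (rev (sorted_list_of_set A))"

lemma sorted_list_of_subset: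
  "A \<subseteq> {..<p+q} \<Longrightarrow> sorted_wrt (<) (sorted_list_of_set A) \<and> distinct (sorted_list_of_set A)
    \<and> set (sorted_list_of_set A) = A"
  using finite_subset[of A "{..<p+q}"] by auto

lemma tr_monomial_rev_monomial:
  assumes A: "A \<subseteq> {..<p+q}" and B: "B \<subseteq> {..<p+q}"
  shows "cl_tr (M (monomial A) (rev_monomial B)) = (if A = B then (\<Prod>a\<in>B. eta p a) else 0)"
proof (cases "A = B")
  case True
  have "M (monomial A) (rev_monomial B) = gprod (sorted_list_of_set B @ rev (sorted_list_of_set B))"
    unfolding monomial_def rev_monomial_def True by simp
  also have "\<dots> = cl_scale (\<Prod>a\<in>B. eta p a) cl_one"
    using sorted_list_of_subset[OF B] B gprod_palindrome[of "sorted_list_of_set B"] by auto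
  finally show ?thesis
    using True by simp
next
  case False
  let ?w = "sorted_list_of_set A @ rev (sorted_list_of_set B)"
  have ws: "set ?w \<subseteq> {..<p+q}"
    using sorted_list_of_subset[OF A] sorted_list_of_subset[OF B] A B by auto
  obtain c L where c: "c \<noteq> 0" "sorted_wrt (<) L" "set L = odd_letters ?w" "gprod ?w = cl_scale c (gprod L)"
    using gprod_normal_form[OF ws] by blast
  have "odd_letters ?w = symd A B"
    using sorted_list_of_subset[OF A] sorted_list_of_subset[OF B]
    by (simp add: odd_letters_append odd_letters_rev odd_letters_distinct)
  then have "L \<noteq> []" "set L \<subseteq> {..<p+q}"
    using c(3) False odd_letters_subset[OF ws] symd_empty_iff[of A B] by auto
  then have "cl_tr (gprod L) = 0"
    using tr_sorted_gprod c(2) by auto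
  then show ?thesis
    using False c(4) by (simp add: monomial_def rev_monomial_def)
qed

end

section \<open>Elements commuting with a Clifford field vector\<close>

interpretation cl_vs: vector_space cl_scale
  by unfold_locales (auto simp: cl_scale_def fun_eq_iff algebra_simps)

lemma sum_cl_apply: "(\<Sum>w\<in>t. f w) C = (\<Sum>w\<in>t. f w C)" for f :: "'a \<Rightarrow> cl"
  by (induction t rule: infinite_finite_induct) auto

definition cl_basis :: "nat set \<Rightarrow> cl"
  where "cl_basis A = (\<lambda>C. if C = A then 1 else 0)"

lemma cl_valid_in_span_basis: "cl_valid p q U \<Longrightarrow> U \<in> cl_vs.span (cl_basis ` Pow {..<p+q})"
proof -
  assume U: "cl_valid p q U"
  have "U = (\<Sum>A\<in>Pow {..<p+q}. cl_scale (U A) (cl_basis A))"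
  proof
    fix C
    have "(\<Sum>A\<in>Pow {..<p+q}. cl_scale (U A) (cl_basis A)) C = (\<Sum>A\<in>Pow {..<p+q}. if C = A then U A else 0)"
      unfolding sum_cl_apply by (rule sum.cong[OF refl]) (simp add: cl_scale_def cl_basis_def)
    also have "\<dots> = U C"
      using U unfolding cl_valid_def by (cases "C \<subseteq> {..<p+q}") auto
    finally show "U C = (\<Sum>A\<in>Pow {..<p+q}. cl_scale (U A) (cl_basis A)) C"
      by simp
  qed
  also have "\<dots> \<in> cl_vs.span (cl_basis ` Pow {..<p+q})"
    by (intro cl_vs.span_sum cl_vs.span_scale cl_vs.span_base) auto
  finally show ?thesis .
qed

lemma cl_gen_commute_coeff:
  assumes D: "D \<subseteq> {..<p+q}" and a: "a < p+q"
    and commute: "cl_mul p q Z (cl_gen a) = cl_mul p q (cl_gen a) Z"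
  shows "cl_sign p D {a} * Z D = cl_sign p {a} D * Z D"
proof -
  let ?C = "symd D {a}"
  have C: "?C \<subseteq> {..<p+q}"
    using symd_subset_iff[OF D, of "{a}"] a by auto
  have "cl_mul p q Z (cl_gen a) ?C
      = (\<Sum>A\<in>Pow {..<p+q}. cl_sign p A (symd A ?C) * Z A * cl_gen a (symd A ?C))"
    using C by (simp add: cl_mul_apply)
  also have "\<dots> = (\<Sum>A\<in>Pow {..<p+q}. if A = D then cl_sign p D {a} * Z D else 0)"
    by (rule sum.cong[OF refl]) (simp add: cl_gen_def symd_eq_iff')
  also have "\<dots> = cl_sign p D {a} * Z D"
    using D by simp
  finally have right: "cl_mul p q Z (cl_gen a) ?C = cl_sign p D {a} * Z D" .
  have "cl_mul p q (cl_gen a) Z ?C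
      = (\<Sum>A\<in>Pow {..<p+q}. cl_sign p A (symd A ?C) * cl_gen a A * Z (symd A ?C))"
    using C by (simp add: cl_mul_apply)
  also have "\<dots> = (\<Sum>A\<in>Pow {..<p+q}. if A = {a} then cl_sign p {a} D * Z D else 0)"
    by (rule sum.cong[OF refl]) (simp add: cl_gen_def)
  also have "\<dots> = cl_sign p {a} D * Z D"
    using a by simp
  finally have left: "cl_mul p q (cl_gen a) Z ?C = cl_sign p {a} D * Z D" .
  show ?thesis
    using commute right left by metis
qed

text \<open>Commuting with \<open>e\<^sub>a\<close> multiplies the coefficient of \<open>e\<^sub>D\<close> by \<open>(-1)^|D - {a}|\<close>, so a nonzero
coefficient forces \<open>|D - {a}|\<close> to be even for every \<open>a\<close>.\<close>

lemma commute_gens_coeff_nonzero: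
  assumes D: "D \<subseteq> {..<p+q}"
    and commute: "\<And>a. a < p+q \<Longrightarrow> cl_mul p q Z (cl_gen a) = cl_mul p q (cl_gen a) Z"
    and nonzero: "Z D \<noteq> 0"
  shows "D = {} \<or> (D = {..<p+q} \<and> odd (p+q))"
proof -
  have fin: "finite D"
    using D finite_subset by blast
  have even: "even (card (D - {a}))" if a: "a < p+q" for a
  proof -
    have "cl_sign p D {a} = cl_sign p {a} D"
      using cl_gen_commute_coeff[OF D a commute[OF a]] nonzero by simp
    then have "(-1::complex) ^ card (D - {a}) = 1"
      using cl_sign_singleton_swap[OF fin, of p a] cl_sign_mult_self[of p D "{a}"] by simp
    then show ?thesis
      by (metis neg_one_odd_power one_neq_neg_one)
  qed
  show ?thesis
  proof (cases "D = {}")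
    case False
    then obtain a where a: "a \<in> D"
      by auto
    then have "odd (card D)"
      using even[of a] D card_Suc_Diff1[OF fin a] by auto
    moreover have "D = {..<p+q}"
    proof (rule ccontr)
      assume "D \<noteq> {..<p+q}"
      then obtain b where "b < p+q" "b \<notin> D"
        using D by auto
      then show False
        using even[of b] \<open>odd (card D)\<close> by simp
    qed
    ultimately show ?thesis
      by simp
  qed simp
qed

context clifford_generators
begin

definition trace_pairing :: "nat set \<Rightarrow> cl \<Rightarrow> complex"
  where "trace_pairing B Y = cl_tr (M Y (rev_monomial B))"

lemma trace_pairing_sum:
  "trace_pairing B (\<Sum>w\<in>t. cl_scale (u w) w) = (\<Sum>w\<in>t. u w * trace_pairing B w)"
proof -
  have "trace_pairing B (\<Sum>w\<in>t. cl_scale (u w) w)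
      = (\<Sum>A\<in>Pow {..<p+q}. \<Sum>w\<in>t. u w * (cl_sign p A A * w A * rev_monomial B A))"
    unfolding trace_pairing_def cl_tr_mul sum_cl_apply
    by (simp add: cl_scale_def sum_distrib_left sum_distrib_right algebra_simps)
  also have "\<dots> = (\<Sum>w\<in>t. u w * trace_pairing B w)"
    unfolding trace_pairing_def cl_tr_mul by (subst sum.swap) (simp add: sum_distrib_left)
  finally show ?thesis .
qed

lemma independent_monomials: "cl_vs.independent (monomial ` Pow {..<p+q})"
  unfolding cl_vs.independent_explicit_module
proof (intro allI impI)
  fix t u v
  assume t: "finite t" "t \<subseteq> monomial ` Pow {..<p+q}" "(\<Sum>v\<in>t. cl_scale (u v) v) = 0" "v \<in> t"
  obtain B where B: "B \<subseteq> {..<p+q}" "v = monomial B"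
    using t by auto
  have others: "trace_pairing B w = 0" if w: "w \<in> t" "w \<noteq> v" for w
  proof -
    obtain A where A: "A \<subseteq> {..<p+q}" "w = monomial A"
      using t w by auto
    then have "A \<noteq> B"
      using w B by auto
    then show ?thesis
      unfolding trace_pairing_def A(2) using tr_monomial_rev_monomial[OF A(1) B(1)] by simp
  qed
  have "0 = trace_pairing B (\<Sum>v\<in>t. cl_scale (u v) v)"
    using t(3) by (simp add: trace_pairing_def cl_tr_def)
  also have "\<dots> = u v * trace_pairing B v"
    unfolding trace_pairing_sum using others t(1,4) by (subst sum.remove[of t v]) auto
  also have "trace_pairing B v = (\<Prod>a\<in>B. eta p a)"
    unfolding trace_pairing_def B(2) using tr_monomial_rev_monomial[OF B(1) B(1)] by simp
  finally show "u v = 0"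
    using prod_eta_nonzero by simp
qed

lemma inj_on_monomial: "inj_on monomial (Pow {..<p+q})"
proof (rule inj_onI)
  fix A B
  assume A: "A \<in> Pow {..<p+q}" and B: "B \<in> Pow {..<p+q}" and eq: "monomial A = monomial B"
  have "cl_tr (M (monomial A) (rev_monomial B)) \<noteq> 0"
    using tr_monomial_rev_monomial[of B B] B eq prod_eta_nonzero by simp
  then show "A = B"
    using tr_monomial_rev_monomial[of A B] A B by (auto split: if_splits)
qed

text \<open>Valid elements lie in the span of the \<open>2\<^sup>n\<close> basis vectors, so the \<open>2\<^sup>n\<close> independent
monomials already span them.\<close>

lemma span_monomials: "cl_valid p q U \<Longrightarrow> U \<in> cl_vs.span (monomial ` Pow {..<p+q})"
proof (rule ccontr)
  assume U: "cl_valid p q U" and notin: "U \<notin> cl_vs.span (monomial ` Pow {..<p+q})"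
  let ?H = "monomial ` Pow {..<p+q}"
  let ?E = "cl_basis ` Pow {..<p+q}"
  have "insert U ?H \<subseteq> cl_vs.span ?E"
  proof
    fix x
    assume "x \<in> insert U ?H"
    then have "cl_valid p q x"
      using U by (auto simp: monomial_def)
    then show "x \<in> cl_vs.span ?E"
      by (rule cl_valid_in_span_basis)
  qed
  moreover have "finite ?E"
    by simp
  ultimately have "card (insert U ?H) \<le> card ?E"
    using cl_vs.independent_span_bound cl_vs.independent_insertI[OF notin independent_monomials]
    by blast
  also have "\<dots> \<le> card (Pow {..<p+q})"
    by (rule card_image_le) simp
  finally have "card (insert U ?H) \<le> card (Pow {..<(p+q)})" .
  moreover have "U \<notin> ?H"
    using notin cl_vs.span_base[of U ?H] by blast
  then have "card (insert U ?H) = Suc (card (Pow {..<(p+q)}))"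
    using card_image[OF inj_on_monomial] by (simp add: card_insert_disjoint)
  ultimately show False
    by simp
qed

text \<open>Commuting with the spanning monomials, \<open>Z\<close> commutes with every \<open>e\<^sub>a\<close>, so only its central
coefficients can be nonzero.\<close>

lemma commutant_eq_0:
  assumes valid: "cl_valid p q Z" and scalar: "Z {} = 0" and top: "odd (p+q) \<longrightarrow> Z {..<p+q} = 0"
    and commute: "\<And>a. a < p+q \<Longrightarrow> M Z (g a) = M (g a) Z"
  shows "Z = 0"
proof -
  have commute_gprod: "M Z (gprod w) = M (gprod w) Z" if "set w \<subseteq> {..<p+q}" for w
    using that
  proof (induction w)
    case Nil
    then show ?case
      by (simp add: cl_mul_one_left cl_mul_one_right valid)
  next
    case (Cons a w)
    then have "M Z (gprod (a # w)) = M (M (g a) Z) (gprod w)"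
      using commute by (simp add: cl_mul_assoc[symmetric])
    also have "\<dots> = M (gprod (a # w)) Z"
      using Cons by (simp add: cl_mul_assoc)
    finally show ?case .
  qed
  have "M Z U = M U Z" if "U \<in> cl_vs.span (monomial ` Pow {..<p+q})" for U
    using that
  proof (induction rule: cl_vs.span_induct)
    case (step x)
    then show ?case
      unfolding monomial_def using commute_gprod sorted_list_of_subset by auto
  next
    case base
    show ?case
      unfolding cl_vs.subspace_def
      by (auto simp: cl_mul_add_left cl_mul_add_right cl_mul_scale_left cl_mul_scale_right)
  qed
  then have "M Z (cl_gen a) = M (cl_gen a) Z" if "a < p+q" for a
    using span_monomials that by (simp add: cl_valid_def cl_gen_def)
  then have "Z D = 0" if "D \<subseteq> {..<p+q}" for D
    using commute_gens_coeff_nonzero[OF that] scalar top by auto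
  then show ?thesis
    using valid by (auto simp: cl_valid_def fun_eq_iff)
qed

end

section \<open>Limits and the derivative of the inverse\<close>

definition cl_norm :: "nat \<Rightarrow> nat \<Rightarrow> cl \<Rightarrow> real"
  where "cl_norm p q U = (\<Sum>A\<in>Pow {..<p+q}. cmod (U A))"

lemma cl_norm_nonneg: "0 \<le> cl_norm p q U"
  unfolding cl_norm_def by (simp add: sum_nonneg)

lemma norm_coeff_le_cl_norm: "C \<subseteq> {..<p+q} \<Longrightarrow> cmod (U C) \<le> cl_norm p q U"
  unfolding cl_norm_def by (rule member_le_sum) auto

lemma cl_norm_triangle: "cl_norm p q (U + V) \<le> cl_norm p q U + cl_norm p q V"
  unfolding cl_norm_def by (simp add: sum.distrib[symmetric] sum_mono norm_triangle_ineq)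

lemma cl_norm_minus_commute: "cl_norm p q (U - V) = cl_norm p q (V - U)"
  unfolding cl_norm_def by (simp add: norm_minus_commute)

lemma cl_norm_mul_le: "cl_norm p q (cl_mul p q U V) \<le> cl_norm p q U * cl_norm p q V"
proof -
  let ?N = "Pow {..<p+q}"
  have "cl_norm p q (cl_mul p q U V) = (\<Sum>C\<in>?N. cmod (\<Sum>A\<in>?N. cl_sign p A (symd A C) * U A * V (symd A C)))"
    unfolding cl_norm_def by (rule sum.cong) (auto simp: cl_mul_apply)
  also have "\<dots> \<le> (\<Sum>C\<in>?N. \<Sum>A\<in>?N. cmod (U A) * cmod (V (symd A C)))"
    by (intro sum_mono order.trans[OF norm_sum]) (simp add: norm_mult norm_cl_sign)
  also have "\<dots> = (\<Sum>A\<in>?N. \<Sum>C\<in>?N. cmod (U A) * cmod (V (symd A C)))"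
    by (rule sum.swap)
  also have "\<dots> = (\<Sum>A\<in>?N. cmod (U A) * cl_norm p q V)"
  proof (rule sum.cong[OF refl])
    fix A
    assume A: "A \<in> ?N"
    have "(\<Sum>C\<in>?N. cmod (V (symd A C))) = cl_norm p q V"
      unfolding cl_norm_def
      by (rule sum.reindex_bij_witness[of _ "symd A" "symd A"])
        (use A symd_subset_iff[of A "{..<p+q}"] in auto)
    then show "(\<Sum>C\<in>?N. cmod (U A) * cmod (V (symd A C))) = cmod (U A) * cl_norm p q V"
      by (simp add: sum_distrib_left[symmetric])
  qed
  also have "\<dots> = cl_norm p q U * cl_norm p q V"
    unfolding cl_norm_def by (simp add: sum_distrib_right)
  finally show ?thesis .
qed

definition cl_tendsto_0 :: "(real \<Rightarrow> cl) \<Rightarrow> cl \<Rightarrow> bool"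
  where "cl_tendsto_0 X X0 \<longleftrightarrow> (\<forall>C. ((\<lambda>t. X t C) \<longlongrightarrow> X0 C) (at 0))"

lemma cl_tendsto_0_mul:
  assumes "cl_tendsto_0 X X0" "cl_tendsto_0 Y Y0"
  shows "cl_tendsto_0 (\<lambda>t. cl_mul p q (X t) (Y t)) (cl_mul p q X0 Y0)"
  unfolding cl_tendsto_0_def
proof
  fix C
  show "((\<lambda>t. cl_mul p q (X t) (Y t) C) \<longlongrightarrow> cl_mul p q X0 Y0 C) (at 0)"
    using assms unfolding cl_tendsto_0_def cl_mul_apply
    by (cases "C \<subseteq> {..<p+q}") (auto intro!: tendsto_sum tendsto_mult)
qed

lemma cl_tendsto_0_iff_cl_norm:
  assumes "\<And>t. cl_valid p q (X t)" "cl_valid p q X0"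
  shows "cl_tendsto_0 X X0 \<longleftrightarrow> ((\<lambda>t. cl_norm p q (X t - X0)) \<longlongrightarrow> 0) (at 0)"
proof
  assume lim: "cl_tendsto_0 X X0"
  have "((\<lambda>t. cmod (X t A - X0 A)) \<longlongrightarrow> 0) (at 0)" for A
    using lim unfolding cl_tendsto_0_def by (simp add: tendsto_norm_zero_iff LIM_zero_iff)
  then have "((\<lambda>t. \<Sum>A\<in>Pow {..<p+q}. cmod (X t A - X0 A)) \<longlongrightarrow> (\<Sum>A\<in>Pow {..<p+q}. 0)) (at 0)"
    by (intro tendsto_sum)
  then show "((\<lambda>t. cl_norm p q (X t - X0)) \<longlongrightarrow> 0) (at 0)"
    unfolding cl_norm_def by simp
next
  assume lim: "((\<lambda>t. cl_norm p q (X t - X0)) \<longlongrightarrow> 0) (at 0)"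
  show "cl_tendsto_0 X X0"
    unfolding cl_tendsto_0_def
  proof
    fix C
    show "((\<lambda>t. X t C) \<longlongrightarrow> X0 C) (at 0)"
    proof (cases "C \<subseteq> {..<p+q}")
      case True
      have "((\<lambda>t. cmod (X t C - X0 C)) \<longlongrightarrow> 0) (at 0)"
        by (rule tendsto_sandwich[OF _ _ tendsto_const lim])
          (use norm_coeff_le_cl_norm[OF True, of "X _ - X0"] in auto)
      then show ?thesis
        by (simp add: tendsto_norm_zero_iff LIM_zero_iff)
    next
      case False
      then show ?thesis
        using assms by (simp add: cl_valid_def)
    qed
  qed
qed

lemma cl_inverse_diff:
  assumes "cl_valid p q a" "cl_valid p q b" "cl_mul p q s a = cl_one" "cl_mul p q b t = cl_one"
  shows "b - a = cl_mul p q b (cl_mul p q (s - t) a)"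
  using assms by (simp add: cl_mul_diff_left cl_mul_diff_right cl_mul_assoc[symmetric] cl_mul_one_left
      cl_mul_one_right)

lemma cl_norm_inverse_diff_le:
  assumes "cl_valid p q a" "cl_valid p q b" "cl_mul p q s a = cl_one" "cl_mul p q b t = cl_one"
  shows "cl_norm p q (b - a) \<le> cl_norm p q b * (cl_norm p q (t - s) * cl_norm p q a)"
proof -
  have "cl_norm p q (b - a) \<le> cl_norm p q b * cl_norm p q (cl_mul p q (s - t) a)"
    unfolding cl_inverse_diff[OF assms] by (rule cl_norm_mul_le)
  also have "\<dots> \<le> cl_norm p q b * (cl_norm p q (s - t) * cl_norm p q a)"
    by (intro mult_left_mono cl_norm_mul_le cl_norm_nonneg)
  finally show ?thesis
    by (simp add: cl_norm_minus_commute)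
qed

text \<open>Once \<open>|s t - s 0| |a 0| \<le> 1/2\<close>, the previous bound gives \<open>|a t| \<le> 2 |a 0|\<close>, and then
\<open>|a t - a 0| \<le> 2 |a 0|\<^sup>2 |s t - s 0|\<close>.\<close>

lemma cl_inverse_continuous:
  assumes valid: "\<And>t. cl_valid p q (s t)" "\<And>t. cl_valid p q (a t)"
    and inverse: "\<And>t. cl_mul p q (s t) (a t) = cl_one" "\<And>t. cl_mul p q (a t) (s t) = cl_one"
    and lim: "cl_tendsto_0 s (s 0)"
  shows "cl_tendsto_0 a (a 0)"
proof -
  let ?n = "cl_norm p q"
  define k where "k = ?n (a 0)"
  have k: "0 \<le> k"
    unfolding k_def by (rule cl_norm_nonneg)
  have ns: "((\<lambda>t. ?n (s t - s 0)) \<longlongrightarrow> 0) (at 0)"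
    using lim cl_tendsto_0_iff_cl_norm valid by blast
  have bound: "?n (a t - a 0) \<le> ?n (a t) * (?n (s t - s 0) * k)" for t
    unfolding k_def by (rule cl_norm_inverse_diff_le[OF valid(2,2) inverse])
  have "\<forall>\<^sub>F t in at 0. ?n (s t - s 0) < 1 / (2 * (k + 1))"
    using order_tendstoD(2)[OF ns, of "1 / (2 * (k + 1))"] k by simp
  then have "\<forall>\<^sub>F t in at 0. ?n (s t - s 0) * k \<le> 1/2"
  proof (rule eventually_mono)
    fix t
    assume "?n (s t - s 0) < 1 / (2 * (k + 1))"
    then have "?n (s t - s 0) * (2 * (k + 1)) < 1"
      using k by (simp add: field_simps)
    then show "?n (s t - s 0) * k \<le> 1/2"
      using cl_norm_nonneg[of p q "s t - s 0"] k by (simp add: algebra_simps)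
  qed
  then have "\<forall>\<^sub>F t in at 0. ?n (a t - a 0) \<le> (2 * k * k) * ?n (s t - s 0)"
  proof (rule eventually_mono)
    fix t
    assume small: "?n (s t - s 0) * k \<le> 1/2"
    have "?n (a t) \<le> k + ?n (a t - a 0)"
      unfolding k_def using cl_norm_triangle[of p q "a 0" "a t - a 0"] by simp
    also have "\<dots> \<le> k + ?n (a t) * (1/2)"
      using bound[of t] mult_left_mono[OF small cl_norm_nonneg[of p q "a t"]] by simp
    finally have "?n (a t) \<le> 2 * k"
      by simp
    then have "?n (a t) * (?n (s t - s 0) * k) \<le> (2 * k) * (?n (s t - s 0) * k)"
      by (intro mult_right_mono mult_nonneg_nonneg cl_norm_nonneg k)
    then show "?n (a t - a 0) \<le> (2 * k * k) * ?n (s t - s 0)"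
      using bound[of t] by (simp add: algebra_simps)
  qed
  moreover have "\<forall>\<^sub>F t in at 0. 0 \<le> ?n (a t - a 0)"
    by (simp add: cl_norm_nonneg)
  ultimately have "((\<lambda>t. ?n (a t - a 0)) \<longlongrightarrow> 0) (at 0)"
    using tendsto_sandwich[OF _ _ tendsto_const tendsto_mult_right_zero[OF ns, of "2 * k * k"]]
    by simp
  then show ?thesis
    using cl_tendsto_0_iff_cl_norm valid by blast
qed

lemma has_vector_derivative_at_0_iff:
  fixes f :: "real \<Rightarrow> 'a::real_normed_vector"
  shows "(f has_vector_derivative D) (at 0) \<longleftrightarrow> ((\<lambda>t. (f t - f 0) /\<^sub>R t) \<longlongrightarrow> D) (at 0)"
proof -
  have "\<forall>\<^sub>F y in at (0::real). norm (f y - f 0 - (y - 0) *\<^sub>R D) / norm (y - 0) = norm ((f y - f 0) /\<^sub>R y - D)"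
  proof (rule eventually_at_filter[THEN iffD2], rule always_eventually, intro allI impI)
    fix y :: real
    assume "y \<noteq> 0"
    then have "f y - f 0 - y *\<^sub>R D = y *\<^sub>R ((f y - f 0) /\<^sub>R y - D)"
      by (simp add: scaleR_diff_right)
    then show "norm (f y - f 0 - (y - 0) *\<^sub>R D) / norm (y - 0) = norm ((f y - f 0) /\<^sub>R y - D)"
      using \<open>y \<noteq> 0\<close> by simp
  qed
  then have "(f has_vector_derivative D) (at 0)
      \<longleftrightarrow> ((\<lambda>y. norm ((f y - f 0) /\<^sub>R y - D)) \<longlongrightarrow> 0) (at 0)"
    unfolding has_vector_derivative_def has_derivative_iff_norm
    using bounded_linear_scaleR_left[of D] tendsto_cong by force
  then show ?thesis
    by (simp add: tendsto_norm_zero_iff LIM_zero_iff)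
qed

lemma cl_inverse_has_vector_derivative:
  assumes valid: "\<And>t. cl_valid p q (s t)" "\<And>t. cl_valid p q (a t)"
    and inverse: "\<And>t. cl_mul p q (s t) (a t) = cl_one" "\<And>t. cl_mul p q (a t) (s t) = cl_one"
    and deriv: "\<And>C. ((\<lambda>t. s t C) has_vector_derivative S' C) (at 0)"
  shows "((\<lambda>t. a t C) has_vector_derivative (- cl_mul p q (a 0) (cl_mul p q S' (a 0))) C) (at 0)"
proof -
  let ?M = "cl_mul p q"
  have "cl_tendsto_0 s (s 0)"
    unfolding cl_tendsto_0_def
    using deriv has_vector_derivative_continuous continuous_at by blast
  then have lim_a: "cl_tendsto_0 a (a 0)"
    by (rule cl_inverse_continuous[OF valid inverse])
  define Q where "Q t = cl_scale (complex_of_real (1 / t)) (s 0 - s t)" for t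
  have lim_Q: "cl_tendsto_0 Q (- S')"
    unfolding cl_tendsto_0_def
  proof
    fix C
    have "((\<lambda>t. - ((s t C - s 0 C) /\<^sub>R t)) \<longlongrightarrow> - S' C) (at 0)"
      using deriv[of C] by (intro tendsto_minus) (simp add: has_vector_derivative_at_0_iff)
    moreover have "- ((s t C - s 0 C) /\<^sub>R t) = Q t C" for t
      unfolding Q_def cl_scale_def by (simp add: scaleR_conv_of_real algebra_simps divide_inverse)
    ultimately show "((\<lambda>t. Q t C) \<longlongrightarrow> (- S') C) (at 0)"
      by simp
  qed
  have "cl_tendsto_0 (\<lambda>t. ?M (a t) (?M (Q t) (a 0))) (?M (a 0) (?M (- S') (a 0)))"
    using lim_a lim_Q by (intro cl_tendsto_0_mul) (auto simp: cl_tendsto_0_def)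
  moreover have "(a t C - a 0 C) /\<^sub>R t = ?M (a t) (?M (Q t) (a 0)) C" for t
  proof -
    have "?M (a t) (?M (Q t) (a 0)) = cl_scale (complex_of_real (1 / t)) (a t - a 0)"
      unfolding Q_def cl_inverse_diff[OF valid(2,2) inverse(1,2)]
      by (simp add: cl_mul_scale_left cl_mul_scale_right)
    then show ?thesis
      by (simp add: cl_scale_def scaleR_conv_of_real divide_inverse)
  qed
  ultimately show ?thesis
    unfolding has_vector_derivative_at_0_iff cl_tendsto_0_def
    by (simp add: cl_mul_minus_left cl_mul_minus_right)
qed

section \<open>Partial derivatives\<close>

lemma Rn_fun_upd: "x \<in> Rn n \<Longrightarrow> mu < n \<Longrightarrow> x(mu := c) \<in> Rn n"
  unfolding Rn_def by auto

lemma pd_eqI: "has_pd f mu x v \<Longrightarrow> pd mu f x = v"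
  unfolding has_pd_def pd_def by (rule vector_derivative_at)

lemma Ck_2_D:
  assumes "Ck n 2 f"
  shows "\<And>mu x. mu < n \<Longrightarrow> x \<in> Rn n \<Longrightarrow> has_pd f mu x (pd mu f x)"
    and "\<And>mu nu x. mu < n \<Longrightarrow> nu < n \<Longrightarrow> x \<in> Rn n \<Longrightarrow> has_pd (pd mu f) nu x (pd nu (pd mu f) x)"
    and "\<And>mu nu. mu < n \<Longrightarrow> nu < n \<Longrightarrow> continuous_on (Rn n) (pd nu (pd mu f))"
  using assms by (simp_all add: numeral_2_eq_2)

lemma pd_cong:
  assumes "\<And>y. y \<in> Rn n \<Longrightarrow> f y = g y" "x \<in> Rn n" "mu < n"
  shows "pd mu f x = pd mu g x"
proof -
  have "(\<lambda>t. f (x(mu := x mu + t))) = (\<lambda>t. g (x(mu := x mu + t)))"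
    using assms Rn_fun_upd by auto
  then show ?thesis
    unfolding pd_def by simp
qed

lemma pd_eq_0:
  assumes "\<And>y. y \<in> Rn n \<Longrightarrow> f y = 0" "x \<in> Rn n" "mu < n"
  shows "pd mu f x = 0"
proof -
  have "pd mu f x = pd mu (\<lambda>y. 0) x"
    using assms by (rule pd_cong)
  also have "\<dots> = 0"
    by (rule pd_eqI) (simp add: has_pd_def)
  finally show ?thesis .
qed

definition cl_has_pd :: "((nat \<Rightarrow> real) \<Rightarrow> cl) \<Rightarrow> nat \<Rightarrow> (nat \<Rightarrow> real) \<Rightarrow> cl \<Rightarrow> bool"
  where "cl_has_pd F mu x V \<longleftrightarrow> (\<forall>A. has_pd (\<lambda>y. F y A) mu x (V A))"

lemma cl_pd_eqI: "cl_has_pd F mu x V \<Longrightarrow> cl_pd mu F x = V"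
  unfolding cl_has_pd_def cl_pd_def by (auto intro!: ext pd_eqI)

lemma cl_has_pd_diff:
  "cl_has_pd F mu x F' \<Longrightarrow> cl_has_pd G mu x G' \<Longrightarrow> cl_has_pd (\<lambda>y. F y - G y) mu x (F' - G')"
  unfolding cl_has_pd_def has_pd_def by (auto intro!: has_vector_derivative_diff)

lemma cl_has_pd_mul:
  assumes F: "cl_has_pd F mu x F'" and G: "cl_has_pd G mu x G'"
  shows "cl_has_pd (\<lambda>y. cl_mul p q (F y) (G y)) mu x (cl_mul p q F' (G x) + cl_mul p q (F x) G')"
  unfolding cl_has_pd_def has_pd_def
proof
  fix C
  let ?l = "\<lambda>t::real. x(mu := x mu + t)"
  show "((\<lambda>t. cl_mul p q (F (?l t)) (G (?l t)) C) has_vector_derivative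
        (cl_mul p q F' (G x) + cl_mul p q (F x) G') C) (at 0)"
  proof (cases "C \<subseteq> {..<p+q}")
    case False
    then show ?thesis
      by (simp add: cl_mul_apply)
  next
    case True
    have dF: "((\<lambda>t. F (?l t) A) has_vector_derivative F' A) (at 0)" for A
      using F unfolding cl_has_pd_def has_pd_def by auto
    have dG: "((\<lambda>t. G (?l t) A) has_vector_derivative G' A) (at 0)" for A
      using G unfolding cl_has_pd_def has_pd_def by auto
    have "((\<lambda>t. (cl_sign p A (symd A C) * F (?l t) A) * G (?l t) (symd A C)) has_vector_derivative
       (cl_sign p A (symd A C) * F (?l 0) A) * G' (symd A C)
         + (cl_sign p A (symd A C) * F' A) * G (?l 0) (symd A C)) (at 0)" for A
      by (intro has_vector_derivative_mult has_vector_derivative_mult_right dF dG)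
    then have "((\<lambda>t. \<Sum>A\<in>Pow {..<p+q}. cl_sign p A (symd A C) * F (?l t) A * G (?l t) (symd A C))
      has_vector_derivative (\<Sum>A\<in>Pow {..<p+q}. cl_sign p A (symd A C) * F x A * G' (symd A C)
        + cl_sign p A (symd A C) * F' A * G x (symd A C))) (at 0)"
      by (intro has_vector_derivative_sum) simp
    then show ?thesis
      using True by (simp add: cl_mul_apply sum.distrib algebra_simps)
  qed
qed

lemma cl_has_pd_inverse:
  assumes S: "\<And>y. y \<in> Rn (p+q) \<Longrightarrow> cl_valid p q (S y) \<and> cl_invertible p q (S y)"
    and dS: "cl_has_pd S mu x S'" and x: "x \<in> Rn (p+q)" and mu: "mu < p+q"
  shows "cl_has_pd (\<lambda>y. cl_inv p q (S y)) mu x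
    (- cl_mul p q (cl_inv p q (S x)) (cl_mul p q S' (cl_inv p q (S x))))"
  unfolding cl_has_pd_def has_pd_def
proof
  fix D
  let ?s = "\<lambda>t::real. S (x(mu := x mu + t))"
  let ?a = "\<lambda>t::real. cl_inv p q (S (x(mu := x mu + t)))"
  have "x(mu := x mu + t) \<in> Rn (p+q)" for t
    by (rule Rn_fun_upd[OF x mu])
  then have valid: "cl_valid p q (?s t)" and invertible: "cl_invertible p q (?s t)" for t
    using S by blast+
  have "((\<lambda>t. ?a t D) has_vector_derivative (- cl_mul p q (?a 0) (cl_mul p q S' (?a 0))) D) (at 0)"
    by (rule cl_inverse_has_vector_derivative[of p q ?s ?a])
      (use valid cl_invertible_inv[OF invertible] dS in \<open>auto simp: cl_has_pd_def has_pd_def\<close>)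
  then show "((\<lambda>t. ?a t D) has_vector_derivative
      (- cl_mul p q (cl_inv p q (S x)) (cl_mul p q S' (cl_inv p q (S x)))) D) (at 0)"
    by simp
qed

lemma cl_pd_coeff: "(\<lambda>y. cl_pd nu F y A) = pd nu (\<lambda>y. F y A)"
  unfolding cl_pd_def by auto

lemma cl_has_pd_if_Ck_2:
  assumes "cl_Ck p q 2 F" "x \<in> Rn (p+q)" "mu < p+q"
  shows "cl_has_pd F mu x (cl_pd mu F x)"
  using assms Ck_2_D(1) unfolding cl_Ck_def cl_has_pd_def cl_pd_def by blast

lemma cl_has_pd_pd_if_Ck_2:
  assumes "cl_Ck p q 2 F" "x \<in> Rn (p+q)" "mu < p+q" "nu < p+q"
  shows "cl_has_pd (cl_pd nu F) mu x (cl_pd mu (cl_pd nu F) x)"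
  unfolding cl_has_pd_def
proof
  fix A
  have "has_pd (pd nu (\<lambda>y. F y A)) mu x (pd mu (pd nu (\<lambda>y. F y A)) x)"
    using assms Ck_2_D(2) unfolding cl_Ck_def by blast
  then show "has_pd (\<lambda>y. cl_pd nu F y A) mu x (cl_pd mu (cl_pd nu F) x A)"
    unfolding cl_pd_coeff by (simp add: cl_pd_def cl_pd_coeff)
qed

lemma cl_pd_cong:
  "(\<And>y. y \<in> Rn (p+q) \<Longrightarrow> F y = G y) \<Longrightarrow> x \<in> Rn (p+q) \<Longrightarrow> mu < p+q \<Longrightarrow> cl_pd mu F x = cl_pd mu G x"
  unfolding cl_pd_def by (auto intro!: ext pd_cong)

lemma cl_pd_coeff_eq_0:
  "(\<And>y. y \<in> Rn (p+q) \<Longrightarrow> F y A = 0) \<Longrightarrow> x \<in> Rn (p+q) \<Longrightarrow> mu < p+q \<Longrightarrow> cl_pd mu F x A = 0"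
  unfolding cl_pd_def by (auto intro!: pd_eq_0)

lemma cl_valid_pd:
  "(\<And>y. y \<in> Rn (p+q) \<Longrightarrow> cl_valid p q (F y)) \<Longrightarrow> x \<in> Rn (p+q) \<Longrightarrow> mu < p+q \<Longrightarrow> cl_valid p q (cl_pd mu F x)"
  unfolding cl_valid_def by (auto intro!: cl_pd_coeff_eq_0)

lemma cl_S_pd:
  assumes "\<And>y. y \<in> Rn (p+q) \<Longrightarrow> cl_S p q (F y)" "x \<in> Rn (p+q)" "mu < p+q"
  shows "cl_S p q (cl_pd mu F x)"
  using assms unfolding cl_S_def by (auto intro!: cl_valid_pd cl_pd_coeff_eq_0)

section \<open>Symmetry of second partial derivatives\<close>

text \<open>Applying the mean value theorem twice, in either order, the second difference
\<open>g(h,h) - g(h,0) - g(0,h) + g(0,0)\<close> equals both \<open>h\<^sup>2 g\<^sub>1\<^sub>2(a,b)\<close> and \<open>h\<^sup>2 g\<^sub>2\<^sub>1(c,d)\<close>.\<close>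

lemma mixed_derivatives_mean_value:
  fixes g g1 g2 g12 g21 :: "real \<Rightarrow> real \<Rightarrow> real"
  assumes d1: "\<And>s t. DERIV (\<lambda>u. g u t) s :> g1 s t"
    and d2: "\<And>s t. DERIV (\<lambda>v. g s v) t :> g2 s t"
    and d12: "\<And>s t. DERIV (\<lambda>v. g1 s v) t :> g12 s t"
    and d21: "\<And>s t. DERIV (\<lambda>u. g2 u t) s :> g21 s t"
    and h: "0 < h"
  shows "\<exists>a b c d. a \<in> {0<..<h} \<and> b \<in> {0<..<h} \<and> c \<in> {0<..<h} \<and> d \<in> {0<..<h} \<and> g12 a b = g21 c d"
proof -
  have "DERIV (\<lambda>u. g u h - g u 0) u :> g1 u h - g1 u 0" for u
    by (intro DERIV_diff d1)
  then obtain a where a: "0 < a" "a < h" "(g h h - g h 0) - (g 0 h - g 0 0) = (h - 0) * (g1 a h - g1 a 0)"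
    using MVT2[OF h, of "\<lambda>u. g u h - g u 0" "\<lambda>u. g1 u h - g1 u 0"] by blast
  obtain b where b: "0 < b" "b < h" "g1 a h - g1 a 0 = (h - 0) * g12 a b"
    using MVT2[OF h, of "\<lambda>v. g1 a v" "\<lambda>v. g12 a v"] d12 by auto
  have "DERIV (\<lambda>v. g h v - g 0 v) v :> g2 h v - g2 0 v" for v
    by (intro DERIV_diff d2)
  then obtain d where d: "0 < d" "d < h" "(g h h - g 0 h) - (g h 0 - g 0 0) = (h - 0) * (g2 h d - g2 0 d)"
    using MVT2[OF h, of "\<lambda>v. g h v - g 0 v" "\<lambda>v. g2 h v - g2 0 v"] by blast
  obtain c where c: "0 < c" "c < h" "g2 h d - g2 0 d = (h - 0) * g21 c d"
    using MVT2[OF h, of "\<lambda>u. g2 u d" "\<lambda>u. g21 u d"] d21 by auto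
  have "h * (h * g12 a b) = h * (h * g21 c d)"
    using a(3) b(3) c(3) d(3) by (simp add: algebra_simps)
  then show ?thesis
    using a b c d h by auto
qed

lemma mixed_derivatives_eq_real:
  fixes g g1 g2 g12 g21 :: "real \<Rightarrow> real \<Rightarrow> real"
  assumes d1: "\<And>s t. ((\<lambda>r. g (s + r) t) has_real_derivative g1 s t) (at 0)"
    and d2: "\<And>s t. ((\<lambda>r. g s (t + r)) has_real_derivative g2 s t) (at 0)"
    and d12: "\<And>s t. ((\<lambda>r. g1 s (t + r)) has_real_derivative g12 s t) (at 0)"
    and d21: "\<And>s t. ((\<lambda>r. g2 (s + r) t) has_real_derivative g21 s t) (at 0)"
    and c12: "continuous (at (0,0)) (\<lambda>z. g12 (fst z) (snd z))"
    and c21: "continuous (at (0,0)) (\<lambda>z. g21 (fst z) (snd z))"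
  shows "g12 0 0 = g21 0 0"
proof (rule ccontr)
  assume ne: "g12 0 0 \<noteq> g21 0 0"
  define e where "e = \<bar>g12 0 0 - g21 0 0\<bar> / 2"
  have e: "0 < e"
    using ne unfolding e_def by simp
  obtain r1 where r1: "0 < r1" "\<And>z. dist z (0,0) < r1 \<Longrightarrow> dist (g12 (fst z) (snd z)) (g12 0 0) < e"
    using c12 e unfolding continuous_at_eps_delta by fastforce
  obtain r2 where r2: "0 < r2" "\<And>z. dist z (0,0) < r2 \<Longrightarrow> dist (g21 (fst z) (snd z)) (g21 0 0) < e"
    using c21 e unfolding continuous_at_eps_delta by fastforce
  define h where "h = min r1 r2 / 2"
  have "DERIV f x :> f'" if "((\<lambda>r. f (x + r)) has_real_derivative f') (at 0)" for f f' x
    using that DERIV_shift[of f f' 0 x] by (simp add: add.commute)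
  then obtain a b c d where abcd: "a \<in> {0<..<h}" "b \<in> {0<..<h}" "c \<in> {0<..<h}" "d \<in> {0<..<h}"
    "g12 a b = g21 c d"
    using mixed_derivatives_mean_value[of g g1 g2 g12 g21 h] d1 d2 d12 d21 r1 r2
    unfolding h_def by fastforce
  have dist: "dist (x, y) (0::real, 0::real) \<le> \<bar>x\<bar> + \<bar>y\<bar>" for x y :: real
    by (simp add: dist_Pair_Pair sqrt_sum_squares_le_sum_abs)
  have "dist (a, b) (0,0) < r1" "dist (c, d) (0,0) < r2"
    using dist[of a b] dist[of c d] abcd unfolding h_def by auto
  then have "\<bar>g12 a b - g12 0 0\<bar> < e" "\<bar>g21 c d - g21 0 0\<bar> < e"
    using r1(2)[of "(a,b)"] r2(2)[of "(c,d)"] by (simp_all add: dist_real_def)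
  moreover have "\<bar>g12 0 0 - g21 0 0\<bar> \<le> \<bar>g21 c d - g21 0 0\<bar> + \<bar>g12 a b - g12 0 0\<bar>"
    using abcd(5) abs_triangle_ineq4[of "g21 c d - g21 0 0" "g12 a b - g12 0 0"] by simp
  moreover have "\<And>u v w :: real. u \<le> v + w \<Longrightarrow> w < u / 2 \<Longrightarrow> v < u / 2 \<Longrightarrow> False"
    by linarith
  ultimately show False
    unfolding e_def by blast
qed

lemma mixed_derivatives_eq_complex:
  fixes g g1 g2 g12 g21 :: "real \<Rightarrow> real \<Rightarrow> complex"
  assumes d1: "\<And>s t. ((\<lambda>r. g (s + r) t) has_vector_derivative g1 s t) (at 0)"
    and d2: "\<And>s t. ((\<lambda>r. g s (t + r)) has_vector_derivative g2 s t) (at 0)"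
    and d12: "\<And>s t. ((\<lambda>r. g1 s (t + r)) has_vector_derivative g12 s t) (at 0)"
    and d21: "\<And>s t. ((\<lambda>r. g2 (s + r) t) has_vector_derivative g21 s t) (at 0)"
    and c12: "continuous (at (0,0)) (\<lambda>z. g12 (fst z) (snd z))"
    and c21: "continuous (at (0,0)) (\<lambda>z. g21 (fst z) (snd z))"
  shows "g12 0 0 = g21 0 0"
proof (rule complex_eqI)
  have Re: "((\<lambda>r. Re (F r)) has_real_derivative Re D) (at 0)"
    and Im: "((\<lambda>r. Im (F r)) has_real_derivative Im D) (at 0)"
    if "(F has_vector_derivative D) (at 0)" for F :: "real \<Rightarrow> complex" and D
    using bounded_linear.has_vector_derivative[OF bounded_linear_Re that]
      bounded_linear.has_vector_derivative[OF bounded_linear_Im that]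
    by (simp_all add: has_real_derivative_iff_has_vector_derivative)
  show "Re (g12 0 0) = Re (g21 0 0)"
    by (rule mixed_derivatives_eq_real[of "\<lambda>s t. Re (g s t)" "\<lambda>s t. Re (g1 s t)" "\<lambda>s t. Re (g2 s t)"])
      (auto intro: Re d1 d2 d12 d21 continuous_Re c12 c21)
  show "Im (g12 0 0) = Im (g21 0 0)"
    by (rule mixed_derivatives_eq_real[of "\<lambda>s t. Im (g s t)" "\<lambda>s t. Im (g1 s t)" "\<lambda>s t. Im (g2 s t)"])
      (auto intro: Im d1 d2 d12 d21 continuous_Im c12 c21)
qed

lemma pd_commute:
  assumes f: "Ck n 2 f" and x: "x \<in> Rn n" and mu: "mu < n" and nu: "nu < n"
  shows "pd mu (pd nu f) x = pd nu (pd mu f) x"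
proof (cases "mu = nu")
  case True
  then show ?thesis
    by simp
next
  case ne: False
  define pt where "pt s t = x(mu := x mu + s, nu := x nu + t)" for s t :: real
  have pt: "pt s t \<in> Rn n" for s t
    unfolding pt_def by (intro Rn_fun_upd x mu nu)
  have pt_mu: "(pt s t)(mu := pt s t mu + r) = pt (s + r) t"
    and pt_nu: "(pt s t)(nu := pt s t nu + r) = pt s (t + r)" for s t r
    unfolding pt_def using ne by (auto simp: fun_eq_iff)
  have "continuous_on UNIV (\<lambda>z::real \<times> real. pt (fst z) (snd z))"
  proof (rule continuous_on_coordinatewise_then_product)
    fix i
    show "continuous_on UNIV (\<lambda>z::real \<times> real. pt (fst z) (snd z) i)"
      unfolding pt_def by (cases "i = nu"; cases "i = mu") (auto intro!: continuous_intros)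
  qed
  then have cont: "continuous (at (0,0)) (\<lambda>z. h (pt (fst z) (snd z)))" if "continuous_on (Rn n) h" for h
    using continuous_on_compose2[OF that, of UNIV "\<lambda>z. pt (fst z) (snd z)"] pt
    by (simp add: continuous_on_eq_continuous_at image_subset_iff)
  note D = Ck_2_D[OF f]
  have "pd nu (pd mu f) (pt 0 0) = pd mu (pd nu f) (pt 0 0)"
  proof (rule mixed_derivatives_eq_complex[of "\<lambda>s t. f (pt s t)" "\<lambda>s t. pd mu f (pt s t)"
        "\<lambda>s t. pd nu f (pt s t)" "\<lambda>s t. pd nu (pd mu f) (pt s t)" "\<lambda>s t. pd mu (pd nu f) (pt s t)"])
    fix s t
    show "((\<lambda>r. f (pt (s + r) t)) has_vector_derivative pd mu f (pt s t)) (at 0)"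
      using D(1)[OF mu pt[of s t]] unfolding has_pd_def pt_mu .
    show "((\<lambda>r. f (pt s (t + r))) has_vector_derivative pd nu f (pt s t)) (at 0)"
      using D(1)[OF nu pt[of s t]] unfolding has_pd_def pt_nu .
    show "((\<lambda>r. pd mu f (pt s (t + r))) has_vector_derivative pd nu (pd mu f) (pt s t)) (at 0)"
      using D(2)[OF mu nu pt[of s t]] unfolding has_pd_def pt_nu .
    show "((\<lambda>r. pd nu f (pt (s + r) t)) has_vector_derivative pd mu (pd nu f) (pt s t)) (at 0)"
      using D(2)[OF nu mu pt[of s t]] unfolding has_pd_def pt_mu .
  qed (intro cont D(3) mu nu)+
  moreover have "pt 0 0 = x"
    unfolding pt_def by simp
  ultimately show ?thesis
    by simp
qed

lemma cl_pd_commute: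
  assumes "cl_Ck p q 2 F" "x \<in> Rn (p+q)" "mu < p+q" "nu < p+q"
  shows "cl_pd mu (cl_pd nu F) x = cl_pd nu (cl_pd mu F) x"
proof
  fix A
  have "pd mu (pd nu (\<lambda>y. F y A)) x = pd nu (pd mu (\<lambda>y. F y A)) x"
    using assms pd_commute unfolding cl_Ck_def by blast
  then show "cl_pd mu (cl_pd nu F) x A = cl_pd nu (cl_pd mu F) x A"
    by (simp add: cl_pd_def cl_pd_coeff)
qed

section \<open>Curvature\<close>

definition curvature :: "nat \<Rightarrow> nat \<Rightarrow> (nat \<Rightarrow> (nat \<Rightarrow> real) \<Rightarrow> cl) \<Rightarrow> nat \<Rightarrow> nat \<Rightarrow> (nat \<Rightarrow> real) \<Rightarrow> cl"
  where "curvature p q C mu nu x = cl_pd mu (C nu) x - cl_pd nu (C mu) x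
    - (cl_mul p q (C mu x) (C nu x) - cl_mul p q (C nu x) (C mu x))"

lemma zero_curvature_iff:
  "zero_curvature p q C \<longleftrightarrow> (\<forall>x\<in>Rn (p+q). \<forall>mu<p+q. \<forall>nu<p+q. curvature p q C mu nu x = 0)"
  by (simp add: zero_curvature_def curvature_def cl_sub_eq cl_comm_eq cl_zero_eq)

lemma curvature_commutator_identity:
  fixes p q :: nat and dCmn dCnm Cm Cn h :: cl
  defines "M \<equiv> cl_mul p q"
  defines "Km \<equiv> M Cm h - M h Cm" and "Kn \<equiv> M Cn h - M h Cn"
  shows "(M dCmn h + M Cn Km - (M Km Cn + M h dCmn)) - (M dCnm h + M Cm Kn - (M Kn Cm + M h dCnm))
    = M (dCmn - dCnm - (M Cm Cn - M Cn Cm)) h - M h (dCmn - dCnm - (M Cm Cn - M Cn Cm))"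
  unfolding M_def Km_def Kn_def
  by (simp add: cl_mul_diff_left cl_mul_diff_right cl_mul_add_left cl_mul_add_right cl_mul_assoc
      fun_eq_iff algebra_simps)

lemma second_pd_of_covariantly_constant:
  assumes H: "cl_Ck p q 2 H" and C: "cl_Ck p q 2 (C b)"
    and parallel: "\<And>a y. a < p+q \<Longrightarrow> y \<in> Rn (p+q) \<Longrightarrow>
      cl_pd a H y = cl_mul p q (C a y) (H y) - cl_mul p q (H y) (C a y)"
    and x: "x \<in> Rn (p+q)" and a: "a < p+q" and b: "b < p+q"
  shows "cl_pd a (cl_pd b H) x =
      cl_mul p q (cl_pd a (C b) x) (H x) + cl_mul p q (C b x) (cl_pd a H x)
      - (cl_mul p q (cl_pd a H x) (C b x) + cl_mul p q (H x) (cl_pd a (C b) x))"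
proof -
  have "cl_pd a (cl_pd b H) x = cl_pd a (\<lambda>y. cl_mul p q (C b y) (H y) - cl_mul p q (H y) (C b y)) x"
    using parallel[OF b] x a by (rule cl_pd_cong)
  also have "\<dots> = cl_mul p q (cl_pd a (C b) x) (H x) + cl_mul p q (C b x) (cl_pd a H x)
      - (cl_mul p q (cl_pd a H x) (C b x) + cl_mul p q (H x) (cl_pd a (C b) x))"
    by (intro cl_pd_eqI cl_has_pd_diff cl_has_pd_mul cl_has_pd_if_Ck_2[OF C x a] cl_has_pd_if_Ck_2[OF H x a])
  finally show ?thesis .
qed

text \<open>Antisymmetrising the second derivatives of \<open>H\<close>: Schwarz makes the left side vanish, and the
Jacobi identity turns the right side into \<open>[F\<^sub>\<mu>\<^sub>\<nu>, H]\<close>.\<close>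

lemma curvature_commute_covariantly_constant:
  assumes H: "cl_Ck p q 2 H" and C: "\<forall>a<p+q. cl_Ck p q 2 (C a)"
    and parallel: "\<And>a y. a < p+q \<Longrightarrow> y \<in> Rn (p+q) \<Longrightarrow>
      cl_pd a H y = cl_mul p q (C a y) (H y) - cl_mul p q (H y) (C a y)"
    and x: "x \<in> Rn (p+q)" and mu: "mu < p+q" and nu: "nu < p+q"
  shows "cl_mul p q (curvature p q C mu nu x) (H x) = cl_mul p q (H x) (curvature p q C mu nu x)"
proof -
  have "cl_Ck p q 2 (C mu)" "cl_Ck p q 2 (C nu)"
    using C mu nu by auto
  then have "cl_mul p q (curvature p q C mu nu x) (H x) - cl_mul p q (H x) (curvature p q C mu nu x)
      = cl_pd mu (cl_pd nu H) x - cl_pd nu (cl_pd mu H) x"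
    unfolding curvature_def
    by (simp add: second_pd_of_covariantly_constant[OF H _ parallel x] parallel[OF mu x]
        parallel[OF nu x] curvature_commutator_identity mu nu)
  also have "\<dots> = 0"
    using cl_pd_commute[OF H x mu nu] by simp
  finally show ?thesis
    by simp
qed

lemma curvature_no_central_part:
  assumes C: "\<forall>a<p+q. \<forall>y\<in>Rn (p+q). cl_S p q (C a y)"
    and x: "x \<in> Rn (p+q)" and mu: "mu < p+q" and nu: "nu < p+q"
  shows "cl_valid p q (curvature p q C mu nu x)" "curvature p q C mu nu x {} = 0"
    "odd (p+q) \<Longrightarrow> curvature p q C mu nu x {..<p+q} = 0"
proof -
  have "cl_S p q (cl_pd mu (C nu) x)" "cl_S p q (cl_pd nu (C mu) x)"
    using C x mu nu by (auto intro: cl_S_pd)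
  then show "cl_valid p q (curvature p q C mu nu x)" "curvature p q C mu nu x {} = 0"
    "odd (p+q) \<Longrightarrow> curvature p q C mu nu x {..<p+q} = 0"
    unfolding curvature_def cl_S_def
    by (simp_all add: cl_mul_empty_commute[of p q "C mu x"] cl_mul_top_commute[of p q "C mu x"])
qed

lemma clifford_generators_field_vector:
  assumes "clifford_field_vector p q h" "x \<in> Rn (p+q)"
  shows "clifford_generators p q (\<lambda>a. h a x)"
  using assms unfolding clifford_field_vector_def clifford_generators_def cl_add_eq by auto

lemma zero_curvature_if_covariantly_constant:
  assumes h: "clifford_field_vector p q h" "\<forall>rho<p+q. cl_Ck p q 2 (h rho)"
    and C: "\<forall>a<p+q. \<forall>y\<in>Rn (p+q). cl_S p q (C a y)" "\<forall>a<p+q. cl_Ck p q 2 (C a)"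
    and parallel: "\<And>a rho y. a < p+q \<Longrightarrow> rho < p+q \<Longrightarrow> y \<in> Rn (p+q) \<Longrightarrow>
      cl_pd a (h rho) y = cl_mul p q (C a y) (h rho y) - cl_mul p q (h rho y) (C a y)"
  shows "zero_curvature p q C"
  unfolding zero_curvature_iff
proof (intro ballI allI impI)
  fix x mu nu
  assume x: "x \<in> Rn (p+q)" and mu: "mu < p+q" and nu: "nu < p+q"
  interpret clifford_generators p q "\<lambda>a. h a x"
    by (rule clifford_generators_field_vector[OF h(1) x])
  show "curvature p q C mu nu x = 0"
    using curvature_no_central_part[OF C(1) x mu nu] h(2) C(2) parallel x mu nu
    by (intro commutant_eq_0 curvature_commute_covariantly_constant) auto
qed

section \<open>Gauge invariance\<close>

definition gauge_transform ::
  "nat \<Rightarrow> nat \<Rightarrow> ((nat \<Rightarrow> real) \<Rightarrow> cl) \<Rightarrow> (nat \<Rightarrow> (nat \<Rightarrow> real) \<Rightarrow> cl) \<Rightarrow> nat \<Rightarrow> (nat \<Rightarrow> real) \<Rightarrow> cl"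
  where "gauge_transform p q S C mu x = cl_mul p q (cl_mul p q (cl_inv p q (S x)) (C mu x)) (S x)
    - cl_mul p q (cl_inv p q (S x)) (cl_pd mu S x)"

text \<open>The left side is \<open>\<partial>\<^sub>\<mu>C'\<^sub>\<nu> - \<partial>\<^sub>\<nu>C'\<^sub>\<mu> - [C'\<^sub>\<mu>, C'\<^sub>\<nu>]\<close> for \<open>C'\<^sub>a = A C\<^sub>a S - A \<partial>\<^sub>aS\<close>, expanded by the
product rule with \<open>\<partial>\<^sub>aA = -A (\<partial>\<^sub>aS) A\<close>; by Schwarz both second derivatives of \<open>S\<close> are \<open>ddS\<close>.\<close>

lemma gauge_curvature_identity:
  fixes p q :: nat and A S Cm Cn dCmn dCnm dSm dSn ddS :: cl
  defines "M \<equiv> cl_mul p q"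
  defines "dAm \<equiv> - M A (M dSm A)" and "dAn \<equiv> - M A (M dSn A)"
  defines "C'm \<equiv> M (M A Cm) S - M A dSm" and "C'n \<equiv> M (M A Cn) S - M A dSn"
  assumes valid: "cl_valid p q A" "cl_valid p q S" "cl_valid p q Cm" "cl_valid p q Cn"
      "cl_valid p q dSm" "cl_valid p q dSn"
    and inverse: "M S A = cl_one" "M A S = cl_one"
  shows "((M (M dAm Cn + M A dCmn) S + M (M A Cn) dSm) - (M dAm dSn + M A ddS))
       - ((M (M dAn Cm + M A dCnm) S + M (M A Cm) dSn) - (M dAn dSm + M A ddS))
       - (M C'm C'n - M C'n C'm)
       = M A (M (dCmn - dCnm - (M Cm Cn - M Cn Cm)) S)"
proof -
  have cancel: "M S (M A Y) = Y" if "cl_valid p q Y" for Y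
    using that inverse unfolding M_def by (simp add: cl_mul_assoc[symmetric] cl_mul_one_left)
  show ?thesis
    using valid unfolding M_def dAm_def dAn_def C'm_def C'n_def
    by (simp add: cl_mul_diff_left cl_mul_diff_right cl_mul_add_left cl_mul_add_right cl_mul_minus_left
        cl_mul_minus_right cl_mul_assoc cancel[unfolded M_def] fun_eq_iff algebra_simps)
qed

lemma cl_has_pd_gauge_transform:
  assumes C: "cl_Ck p q 2 (C nu)" and S: "cl_Ck p q 2 S"
    and invertible: "\<And>y. y \<in> Rn (p+q) \<Longrightarrow> cl_valid p q (S y) \<and> cl_invertible p q (S y)"
    and x: "x \<in> Rn (p+q)" and mu: "mu < p+q" and nu: "nu < p+q"
  defines "A \<equiv> cl_inv p q (S x)"
  defines "dA \<equiv> - cl_mul p q A (cl_mul p q (cl_pd mu S x) A)"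
  shows "cl_has_pd (gauge_transform p q S C nu) mu x
    (cl_mul p q (cl_mul p q dA (C nu x) + cl_mul p q A (cl_pd mu (C nu) x)) (S x)
      + cl_mul p q (cl_mul p q A (C nu x)) (cl_pd mu S x)
     - (cl_mul p q dA (cl_pd nu S x) + cl_mul p q A (cl_pd mu (cl_pd nu S) x)))"
proof -
  have dS: "cl_has_pd S a x (cl_pd a S x)" if "a < p+q" for a
    using cl_has_pd_if_Ck_2[OF S x that] .
  have "cl_has_pd (\<lambda>y. cl_inv p q (S y)) mu x dA"
    unfolding dA_def A_def using invertible dS[OF mu] x mu by (rule cl_has_pd_inverse)
  then show ?thesis
    unfolding gauge_transform_def[abs_def] A_def
    by (intro cl_has_pd_diff cl_has_pd_mul dS cl_has_pd_if_Ck_2[OF C x mu]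
        cl_has_pd_pd_if_Ck_2[OF S x mu nu] mu nu)
qed

lemma curvature_gauge_transform:
  assumes C: "\<forall>a<p+q. \<forall>y\<in>Rn (p+q). cl_valid p q (C a y)" "\<forall>a<p+q. cl_Ck p q 2 (C a)"
    and S: "cl_Ck p q 2 S" "\<And>y. y \<in> Rn (p+q) \<Longrightarrow> cl_valid p q (S y) \<and> cl_invertible p q (S y)"
    and x: "x \<in> Rn (p+q)" and mu: "mu < p+q" and nu: "nu < p+q"
  shows "curvature p q (gauge_transform p q S C) mu nu x
    = cl_mul p q (cl_inv p q (S x)) (cl_mul p q (curvature p q C mu nu x) (S x))"
proof -
  have valid_pd: "cl_valid p q (cl_pd a S x)" if "a < p+q" for a
    using S(2) x that by (auto intro: cl_valid_pd)
  have Cmu: "cl_Ck p q 2 (C mu)" and Cnu: "cl_Ck p q 2 (C nu)"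
    using C(2) mu nu by auto
  note derivatives = cl_pd_eqI[OF cl_has_pd_gauge_transform[where C = C, OF Cnu S x mu nu]]
    cl_pd_eqI[OF cl_has_pd_gauge_transform[where C = C, OF Cmu S x nu mu]]
  show ?thesis
    unfolding curvature_def
    by (simp only: derivatives cl_pd_commute[OF S(1) x nu mu] gauge_transform_def)
      (intro gauge_curvature_identity;
        use C(1) S(2)[OF x] x mu nu cl_invertible_inv[of p q "S x"] valid_pd[OF mu] valid_pd[OF nu] in auto)
qed

lemma zero_curvature_gauge_transform:
  assumes C: "\<forall>a<p+q. \<forall>y\<in>Rn (p+q). cl_valid p q (C a y)" "\<forall>a<p+q. cl_Ck p q 2 (C a)"
    "zero_curvature p q C"
    and S: "cl_Ck p q 2 S" "\<And>y. y \<in> Rn (p+q) \<Longrightarrow> cl_valid p q (S y) \<and> cl_invertible p q (S y)"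
  shows "zero_curvature p q (gauge_transform p q S C)"
  using C S by (simp add: zero_curvature_iff curvature_gauge_transform)

theorem theorem7:
  fixes p q :: nat
  shows
   "(\<forall>(h :: nat \<Rightarrow> (nat \<Rightarrow> real) \<Rightarrow> cl) (C :: nat \<Rightarrow> (nat \<Rightarrow> real) \<Rightarrow> cl).
      clifford_field_vector p q h \<and>
      (\<forall>mu<p+q. \<forall>x\<in>Rn (p+q). cl_S p q (h mu x)) \<and>
      (\<forall>mu<p+q. \<forall>x\<in>Rn (p+q). cl_S p q (C mu x)) \<and>
      (\<forall>mu<p+q. cl_Ck p q 2 (h mu)) \<and>
      (\<forall>mu<p+q. cl_Ck p q 2 (C mu)) \<and>
      (\<forall>x\<in>Rn (p+q). \<forall>mu<p+q. \<forall>nu<p+q.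
         cl_sub (cl_pd mu (h nu) x) (cl_comm p q (C mu x) (h nu x)) = cl_zero)
      \<longrightarrow> zero_curvature p q C)
  \<and>
   (\<forall>(C :: nat \<Rightarrow> (nat \<Rightarrow> real) \<Rightarrow> cl) (S :: (nat \<Rightarrow> real) \<Rightarrow> cl).
      (\<forall>mu<p+q. \<forall>x\<in>Rn (p+q). cl_S p q (C mu x)) \<and>
      (\<forall>mu<p+q. cl_Ck p q 2 (C mu)) \<and>
      zero_curvature p q C \<and>
      cl_smooth p q S \<and>
      (\<forall>x\<in>Rn (p+q). cl_valid p q (S x) \<and> cl_invertible p q (S x)) \<and>
      (\<forall>mu<p+q. \<forall>x\<in>Rn (p+q). cl_S p q (cl_mul p q (cl_inv p q (S x)) (cl_pd mu S x)))
      \<longrightarrow> zero_curvature p q (\<lambda>mu x.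
             cl_sub (cl_mul p q (cl_mul p q (cl_inv p q (S x)) (C mu x)) (S x))
                    (cl_mul p q (cl_inv p q (S x)) (cl_pd mu S x))))"
proof (intro conjI allI impI; elim conjE)
  fix h C :: "nat \<Rightarrow> (nat \<Rightarrow> real) \<Rightarrow> cl"
  assume "clifford_field_vector p q h" "\<forall>mu<p+q. cl_Ck p q 2 (h mu)"
    "\<forall>mu<p+q. \<forall>x\<in>Rn (p+q). cl_S p q (C mu x)" "\<forall>mu<p+q. cl_Ck p q 2 (C mu)"
    "\<forall>x\<in>Rn (p+q). \<forall>mu<p+q. \<forall>nu<p+q.
      cl_sub (cl_pd mu (h nu) x) (cl_comm p q (C mu x) (h nu x)) = cl_zero"
  then show "zero_curvature p q C"
    by (intro zero_curvature_if_covariantly_constant) (auto simp: cl_sub_eq cl_comm_eq cl_zero_eq)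
next
  fix C :: "nat \<Rightarrow> (nat \<Rightarrow> real) \<Rightarrow> cl" and S :: "(nat \<Rightarrow> real) \<Rightarrow> cl"
  assume "\<forall>mu<p+q. \<forall>x\<in>Rn (p+q). cl_S p q (C mu x)" "\<forall>mu<p+q. cl_Ck p q 2 (C mu)"
    "zero_curvature p q C" "cl_smooth p q S" "\<forall>x\<in>Rn (p+q). cl_valid p q (S x) \<and> cl_invertible p q (S x)"
  then have "zero_curvature p q (gauge_transform p q S C)"
    by (intro zero_curvature_gauge_transform) (auto simp: cl_S_def cl_smooth_def)
  then show "zero_curvature p q (\<lambda>mu x.
      cl_sub (cl_mul p q (cl_mul p q (cl_inv p q (S x)) (C mu x)) (S x))
        (cl_mul p q (cl_inv p q (S x)) (cl_pd mu S x)))"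
    by (simp add: gauge_transform_def[abs_def] cl_sub_eq)
qed

end
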